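(* Assume the filtration is regular with constant $R$ and let $r=\frac1{2(R+3)}$. For every bounded $f$ there exists a sparse sequence of stopping times $\{\nu_j\}_{j\ge0}$ such that $$Sf\lesssim\Big(\sum_{j=0}^\infty[\mathsf{P}^r_{\nu_j}(\mathcal{M}_{(\nu_j)}f)]^2\mathbf{1}_{\{\nu_j<\infty\}}\Big)^{1/2},$$ with implicit constant independent of $f$.
   Context: $(\Omega,\mathcal{F},\mu)$ is a probability space with filtration $\{\mathcal{F}_k\}_{k\ge0}$ generating $\mathcal{F}$, $\mathsf{E}_k=\mathsf{E}[\cdot|\mathcal{F}_k]$, $df_k=\mathsf{E}_kf-\mathsf{E}_{k-1}f$ ($k\ge1$), $df_0=\mathsf{E}_0f$. Regular with constant $R$: $\mathsf{E}_kf\le R\,\mathsf{E}_{k-1}f$ a.e. for nonnegative integrable $f$. $Sf=(\sum_{m\ge0}(df_m)^2)^{1/2}$. $\mathsf{P}^r_kg(x):=\inf\{t\in\mathbb{Q}:\mathsf{E}_k[\mathbf{1}_{\{g>t\}}](x)\le r\}$, $\mathsf{P}^r_\nu g=\sum_k\mathbf{1}_{\{\nu=k\}}\mathsf{P}^r_kg$, $\mathcal{M}_{(\nu)}f(x)=\sup_{k\ge\nu(x)}|\mathsf{E}_kf(x)|$. An increasing sequence of stopping times $\{\nu_k\}$ is sparse if with $E_k=\{\nu_k<\infty\}$, for every $k$ and $A\subseteq E_k$ with $A\in\mathcal{F}_{\nu_k}$, $\mu(A\cap E_{k+1})\le\frac12\mu(A)$. *)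

theory Defs
  imports "HOL-Probability.Probability"
begin

definition filtration :: "'a measure \<Rightarrow> (nat \<Rightarrow> 'a measure) \<Rightarrow> bool" where
  "filtration M F \<longleftrightarrow> (\<forall>k. subalgebra M (F k)) \<and> (\<forall>k. sets (F k) \<subseteq> sets (F (Suc k)))
     \<and> sets M = sigma_sets (space M) (\<Union>k. sets (F k))"

definition regular :: "'a measure \<Rightarrow> (nat \<Rightarrow> 'a measure) \<Rightarrow> real \<Rightarrow> bool" where
  "regular M F R \<longleftrightarrow> (\<forall>f k. integrable M f \<and> (AE x in M. 0 \<le> f x) \<and> k \<ge> 1 \<longrightarrow>
      (AE x in M. real_cond_exp M (F k) f x \<le> R * real_cond_exp M (F (k - 1)) f x))"

fun mdiff :: "'a measure \<Rightarrow> (nat \<Rightarrow> 'a measure) \<Rightarrow> ('a \<Rightarrow> real) \<Rightarrow> nat \<Rightarrow> 'a \<Rightarrow> real" where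
  "mdiff M F f 0 x = real_cond_exp M (F 0) f x"
| "mdiff M F f (Suc m) x = real_cond_exp M (F (Suc m)) f x - real_cond_exp M (F m) f x"

definition esqrt :: "ennreal \<Rightarrow> ennreal" where
  "esqrt s = (if s = \<infinity> then \<infinity> else ennreal (sqrt (enn2real s)))"

definition sqfun :: "'a measure \<Rightarrow> (nat \<Rightarrow> 'a measure) \<Rightarrow> ('a \<Rightarrow> real) \<Rightarrow> 'a \<Rightarrow> ennreal" where
  "sqfun M F f x = esqrt (\<Sum>m. ennreal ((mdiff M F f m x)\<^sup>2))"

definition stopping_time_enat :: "'a measure \<Rightarrow> (nat \<Rightarrow> 'a measure) \<Rightarrow> ('a \<Rightarrow> enat) \<Rightarrow> bool" where
  "stopping_time_enat M F \<nu> \<longleftrightarrow> (\<forall>k. {x \<in> space M. \<nu> x = enat k} \<in> sets (F k))"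

definition in_stopped_sets :: "'a measure \<Rightarrow> (nat \<Rightarrow> 'a measure) \<Rightarrow> ('a \<Rightarrow> enat) \<Rightarrow> 'a set \<Rightarrow> bool" where
  "in_stopped_sets M F \<nu> A \<longleftrightarrow> A \<in> sets M \<and> (\<forall>k. A \<inter> {x \<in> space M. \<nu> x = enat k} \<in> sets (F k))"

definition fin_set :: "'a measure \<Rightarrow> ('a \<Rightarrow> enat) \<Rightarrow> 'a set" where
  "fin_set M \<nu> = {x \<in> space M. \<nu> x < \<infinity>}"

definition sparse :: "'a measure \<Rightarrow> (nat \<Rightarrow> 'a measure) \<Rightarrow> (nat \<Rightarrow> 'a \<Rightarrow> enat) \<Rightarrow> bool" where
  "sparse M F \<nu> \<longleftrightarrow> (\<forall>j. stopping_time_enat M F (\<nu> j))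
     \<and> (\<forall>j. \<forall>x \<in> space M. \<nu> j x \<le> \<nu> (Suc j) x)
     \<and> (\<forall>k A. A \<subseteq> fin_set M (\<nu> k) \<and> in_stopped_sets M F (\<nu> k) A \<longrightarrow>
            measure M (A \<inter> fin_set M (\<nu> (Suc k))) \<le> measure M A / 2)"

text \<open>Stopped maximal function M_(\<nu>) f x = sup_{k \<ge> \<nu> x} |E_k f x| (empty sup = 0).\<close>
definition stopped_max :: "'a measure \<Rightarrow> (nat \<Rightarrow> 'a measure) \<Rightarrow> ('a \<Rightarrow> enat) \<Rightarrow> ('a \<Rightarrow> real) \<Rightarrow> 'a \<Rightarrow> ennreal" where
  "stopped_max M F \<nu> f x = (SUP k \<in> {k. \<nu> x \<le> enat k}. ennreal \<bar>real_cond_exp M (F k) f x\<bar>)"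

text \<open>P^r_k g(x) = inf { t \<in> \<rat> : E_k[1_{g>t}](x) \<le> r } (inf of empty set = +\<infinity>).\<close>
definition Pk :: "'a measure \<Rightarrow> (nat \<Rightarrow> 'a measure) \<Rightarrow> real \<Rightarrow> nat \<Rightarrow> ('a \<Rightarrow> ereal) \<Rightarrow> 'a \<Rightarrow> ereal" where
  "Pk M F r k g x = Inf {ereal t | t. t \<in> \<rat> \<and>
      real_cond_exp M (F k) (indicator {y \<in> space M. g y > ereal t}) x \<le> r}"

text \<open>P^r_\<nu> g = \<Sum>_k 1_{\<nu>=k} P^r_k g (hence 0 where \<nu> = \<infinity>).\<close>
definition Pnu :: "'a measure \<Rightarrow> (nat \<Rightarrow> 'a measure) \<Rightarrow> real \<Rightarrow> ('a \<Rightarrow> enat) \<Rightarrow> ('a \<Rightarrow> ereal) \<Rightarrow> 'a \<Rightarrow> ereal" where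
  "Pnu M F r \<nu> g x = (case \<nu> x of enat k \<Rightarrow> Pk M F r k g x | \<infinity> \<Rightarrow> 0)"

end

theory Submission
  imports Defs
begin

(* Put nu_0 = 0 and lambda_j = P^r_{nu_j} (M_(nu_j) f), and let nu_(j+1) be the first k > nu_j at
   which either the conditional probability E_k 1_G of G = {lambda_j < M_(nu_j) f} exceeds 1/(R+1),
   or the square function increment sum_{nu_j < m <= k} (df_m)^2 exceeds (R+3) lambda_j^2.
   The choice of lambda_j gives E_{nu_j} 1_G <= r, and regularity keeps E_k 1_G <= R/(R+1) < 1 up to
   and including nu_(j+1); hence |E_k f| <= lambda_j a.e. on that range. Orthogonality of martingale
   differences turns this into an L^2 bound on the square function increment. On every
   F_{nu_j}-measurable part of {nu_j < oo} the first event thus has relative measure at most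
   r (R+1) and, by Chebyshev's inequality, the second at most 1/(R+3); these add up to 1/2. So
   nu_j = oo eventually a.e., and summing over the blocks gives
   (Sf)^2 <= (R+8) sum_j lambda_j^2 1{nu_j < oo} a.e. *)

lemma (in finite_measure) scaled_measure_Int_UN_le:
  fixes A :: "nat \<Rightarrow> 'a set"
  assumes disj: "disjoint_family A" and A: "\<And>k. A k \<in> sets M"
    and H: "H \<in> sets M" and H': "H' \<in> sets M"
    and le: "\<And>k. a * measure M (A k \<inter> H) \<le> b * measure M (A k \<inter> H')"
  shows "a * measure M ((\<Union>k. A k) \<inter> H) \<le> b * measure M ((\<Union>k. A k) \<inter> H')"
proof -
  have sums: "(\<lambda>k. measure M (A k \<inter> G)) sums measure M ((\<Union>k. A k) \<inter> G)" if "G \<in> sets M" for G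
  proof -
    have "(\<lambda>k. measure M (A k \<inter> G)) sums measure M (\<Union>k. A k \<inter> G)"
      using disj A that by (intro finite_measure_UNION) (auto simp: disjoint_family_on_def)
    moreover have "(\<Union>k. A k \<inter> G) = (\<Union>k. A k) \<inter> G" by auto
    ultimately show ?thesis by simp
  qed
  show ?thesis
    using le by (rule sums_le[OF _ sums_mult[OF sums[OF H]] sums_mult[OF sums[OF H']]])
qed

lemma (in finite_measure) measure_UN_incseq_le:
  assumes "incseq A" "\<And>m. A m \<in> sets M" "\<And>m. measure M (A m) \<le> c"
  shows "measure M (\<Union>m. A m) \<le> c"
proof (rule LIMSEQ_le_const2)
  show "(\<lambda>m. measure M (A m)) \<longlonglongrightarrow> measure M (\<Union>m. A m)"
    using assms by (intro finite_Lim_measure_incseq) auto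
qed (use assms in auto)

lemma sum_stopped_increments:
  fixes a :: "nat \<Rightarrow> real" and \<tau> :: enat
  assumes "n \<le> N" "enat n \<le> \<tau>"
  obtains s where "n \<le> s" "enat s \<le> \<tau>"
    "(\<Sum>m\<in>{n<..N}. if enat m \<le> \<tau> then a m - a (m - 1) else 0) = a s - a n"
proof -
  have "\<exists>s. n \<le> s \<and> enat s \<le> \<tau> \<and> (enat N \<le> \<tau> \<longrightarrow> s = N) \<and>
      (\<Sum>m\<in>{n<..N}. if enat m \<le> \<tau> then a m - a (m - 1) else 0) = a s - a n"
    using assms(1)
  proof (induction N rule: dec_induct)
    case base
    then show ?case using assms(2) by auto
  next
    case (step N)
    then obtain s where s: "n \<le> s" "enat s \<le> \<tau>" "enat N \<le> \<tau> \<longrightarrow> s = N"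
      "(\<Sum>m\<in>{n<..N}. if enat m \<le> \<tau> then a m - a (m - 1) else 0) = a s - a n" by blast
    have split: "{n<..Suc N} = insert (Suc N) {n<..N}" using step.hyps by auto
    show ?case
    proof (cases "enat (Suc N) \<le> \<tau>")
      case True
      then have "enat N \<le> \<tau>" using Suc_ile_eq order_less_imp_le by blast
      with True s show ?thesis unfolding split using step.hyps by (intro exI[of _ "Suc N"]) auto
    next
      case False
      with s show ?thesis unfolding split by (intro exI[of _ s]) auto
    qed
  qed
  then show ?thesis using that by blast
qed

lemma block_sum_squares_le:
  fixes d e :: "nat \<Rightarrow> real" and \<tau> :: enat
  assumes "0 \<le> K" and diff: "\<And>m. d (Suc m) = e (Suc m) - e m"
    and e_le: "\<And>k. n \<le> k \<Longrightarrow> enat k \<le> \<tau> \<Longrightarrow> \<bar>e k\<bar> \<le> l"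
    and sum_le: "\<And>k. n < k \<Longrightarrow> enat k < \<tau> \<Longrightarrow> (\<Sum>m\<in>{n<..k}. (d m)\<^sup>2) \<le> K * l\<^sup>2"
    and q: "enat q \<le> \<tau>"
  shows "(\<Sum>m\<in>{n<..q}. (d m)\<^sup>2) \<le> (K + 4) * l\<^sup>2"
proof -
  have sum_le': "(\<Sum>m\<in>{n<..k}. (d m)\<^sup>2) \<le> K * l\<^sup>2" if "enat k < \<tau>" for k
    using sum_le[OF _ that] \<open>0 \<le> K\<close> by (cases "n < k") auto
  consider "q \<le> n" | "n < q" "enat q < \<tau>" | "n < q" "\<tau> = enat q"
    using q by (cases "q \<le> n") (auto simp: order_le_less)
  then show ?thesis
  proof cases
    case 1
    then show ?thesis using \<open>0 \<le> K\<close> by simp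
  next
    case 2
    have "K * l\<^sup>2 \<le> (K + 4) * l\<^sup>2" by (intro mult_right_mono) auto
    with sum_le'[OF 2(2)] show ?thesis by linarith
  next
    case 3
    then obtain q' where q': "q = Suc q'" "n \<le> q'" by (cases q) auto
    have "\<bar>d q\<bar> \<le> \<bar>2 * l\<bar>"
      using e_le[of q] e_le[of q'] diff[of q'] 3 q' by simp
    then have "(d q)\<^sup>2 \<le> 4 * l\<^sup>2"
      by (subst (asm) abs_le_square_iff) (simp add: power_mult_distrib)
    moreover have "(\<Sum>m\<in>{n<..q'}. (d m)\<^sup>2) \<le> K * l\<^sup>2" using sum_le' 3 q' by simp
    moreover have "{n<..q} = insert q {n<..q'}" using q' by auto
    ultimately show ?thesis using q' by (simp add: algebra_simps)
  qed
qed

lemma sum_squares_from_le_blocks: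
  fixes \<sigma> :: "nat \<Rightarrow> enat" and d e l :: "nat \<Rightarrow> real"
  assumes "0 \<le> K" and \<sigma>J: "\<sigma> J = \<infinity>"
    and incr: "\<And>j n. \<sigma> j = enat n \<Longrightarrow> enat n < \<sigma> (Suc j)"
    and inf: "\<And>j. \<sigma> j = \<infinity> \<Longrightarrow> \<sigma> (Suc j) = \<infinity>"
    and e_le: "\<And>j n k. \<sigma> j = enat n \<Longrightarrow> n \<le> k \<Longrightarrow> enat k \<le> \<sigma> (Suc j) \<Longrightarrow> \<bar>e k\<bar> \<le> l j"
    and sum_le: "\<And>j n k. \<sigma> j = enat n \<Longrightarrow> n < k \<Longrightarrow> enat k < \<sigma> (Suc j) \<Longrightarrow>
      (\<Sum>m\<in>{n<..k}. (d m)\<^sup>2) \<le> K * (l j)\<^sup>2"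
    and diff: "\<And>m. d (Suc m) = e (Suc m) - e m"
    and \<sigma>j: "\<sigma> j = enat n"
  shows "(\<Sum>m\<in>{n<..N}. (d m)\<^sup>2) \<le> (K + 4) * (\<Sum>i\<in>{j..<J}. if \<sigma> i = \<infinity> then 0 else (l i)\<^sup>2)"
  using \<sigma>j
proof (induction "J - j" arbitrary: j n N rule: less_induct)
  case less
  define L where "L i = (if \<sigma> i = \<infinity> then 0 else (l i)\<^sup>2)" for i
  have L_nonneg: "0 \<le> L i" for i unfolding L_def by auto
  have "\<sigma> i = \<infinity>" if "J \<le> i" for i
    using that by (induction i rule: dec_induct) (use \<sigma>J inf in auto)
  then have "j < J" using less.prems by (cases "J \<le> j") auto
  have block: "(\<Sum>m\<in>{n<..q}. (d m)\<^sup>2) \<le> (K + 4) * (l j)\<^sup>2" if "enat q \<le> \<sigma> (Suc j)" for q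
    using \<open>0 \<le> K\<close> diff e_le[OF less.prems] sum_le[OF less.prems] that
    by (rule block_sum_squares_le)
  have split: "(\<Sum>i\<in>{j..<J}. L i) = (l j)\<^sup>2 + (\<Sum>i\<in>{Suc j..<J}. L i)"
    using \<open>j < J\<close> less.prems by (simp add: sum.atLeast_Suc_lessThan L_def)
  show ?case
  proof (cases "\<sigma> (Suc j)")
    case infinity
    have "(\<Sum>m\<in>{n<..N}. (d m)\<^sup>2) \<le> (K + 4) * (l j)\<^sup>2" by (rule block) (simp add: infinity)
    also have "\<dots> \<le> (K + 4) * (\<Sum>i\<in>{j..<J}. L i)"
      unfolding split using \<open>0 \<le> K\<close> L_nonneg by (intro mult_left_mono) (auto intro: sum_nonneg)
    finally show ?thesis unfolding L_def .
  next
    case (enat p)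
    have "n < p" using incr[OF less.prems] enat by simp
    then have "{n<..N} = {n<..min N p} \<union> {p<..N}" by auto
    then have "(\<Sum>m\<in>{n<..N}. (d m)\<^sup>2) = (\<Sum>m\<in>{n<..min N p}. (d m)\<^sup>2) + (\<Sum>m\<in>{p<..N}. (d m)\<^sup>2)"
      by (simp add: sum.union_disjoint)
    also have "\<dots> \<le> (K + 4) * (l j)\<^sup>2 + (K + 4) * (\<Sum>i\<in>{Suc j..<J}. L i)"
      using block[of "min N p"] less.hyps[of "Suc j" p N] \<open>j < J\<close> enat
      unfolding L_def by (intro add_mono) auto
    also have "\<dots> = (K + 4) * (\<Sum>i\<in>{j..<J}. L i)" unfolding split by (simp add: algebra_simps)
    finally show ?thesis unfolding L_def .
  qed
qed

lemma sum_squares_le_blocks: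
  fixes \<sigma> :: "nat \<Rightarrow> enat" and d e l :: "nat \<Rightarrow> real"
  assumes "0 \<le> K" and \<sigma>0: "\<sigma> 0 = 0" and \<sigma>J: "\<sigma> J = \<infinity>"
    and "\<And>j n. \<sigma> j = enat n \<Longrightarrow> enat n < \<sigma> (Suc j)"
    and "\<And>j. \<sigma> j = \<infinity> \<Longrightarrow> \<sigma> (Suc j) = \<infinity>"
    and e_le: "\<And>j n k. \<sigma> j = enat n \<Longrightarrow> n \<le> k \<Longrightarrow> enat k \<le> \<sigma> (Suc j) \<Longrightarrow> \<bar>e k\<bar> \<le> l j"
    and "\<And>j n k. \<sigma> j = enat n \<Longrightarrow> n < k \<Longrightarrow> enat k < \<sigma> (Suc j) \<Longrightarrow>
      (\<Sum>m\<in>{n<..k}. (d m)\<^sup>2) \<le> K * (l j)\<^sup>2"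
    and d0: "d 0 = e 0" and "\<And>m. d (Suc m) = e (Suc m) - e m"
  shows "(\<Sum>m<N. (d m)\<^sup>2) \<le> (K + 5) * (\<Sum>j<J. if \<sigma> j = \<infinity> then 0 else (l j)\<^sup>2)"
proof -
  define L where "L j = (if \<sigma> j = \<infinity> then 0 else (l j)\<^sup>2)" for j
  have "0 < J" using \<sigma>0 \<sigma>J by (cases J) auto
  have "\<bar>e 0\<bar> \<le> l 0" using e_le[of 0 0 0] \<sigma>0 by (simp add: zero_enat_def[symmetric])
  then have "(d 0)\<^sup>2 \<le> L 0"
    using \<sigma>0 d0 by (simp add: L_def abs_le_square_iff[symmetric])
  also have "\<dots> \<le> (\<Sum>i<J. L i)" using \<open>0 < J\<close> by (intro member_le_sum) (auto simp: L_def)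
  finally have first: "(d 0)\<^sup>2 \<le> (\<Sum>i<J. L i)" .
  have "(\<Sum>m<N. (d m)\<^sup>2) \<le> (\<Sum>m\<in>insert 0 {0<..N}. (d m)\<^sup>2)"
    by (rule sum_mono2) auto
  also have "\<dots> = (d 0)\<^sup>2 + (\<Sum>m\<in>{0<..N}. (d m)\<^sup>2)" by simp
  also have "(\<Sum>m\<in>{0<..N}. (d m)\<^sup>2) \<le> (K + 4) * (\<Sum>i\<in>{0..<J}. L i)"
    unfolding L_def
    by (rule sum_squares_from_le_blocks[where e=e]) (use assms in \<open>simp_all add: zero_enat_def\<close>)
  also have "(d 0)\<^sup>2 + (K + 4) * (\<Sum>i\<in>{0..<J}. L i) \<le> (\<Sum>i<J. L i) + (K + 4) * (\<Sum>i<J. L i)"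
    using first by (simp add: atLeast0LessThan)
  finally show ?thesis unfolding L_def by (simp add: algebra_simps)
qed

lemma esqrt_le_sqrt_mult:
  assumes "S \<le> ennreal c * T" "0 < c"
  shows "esqrt S \<le> ennreal (sqrt c) * esqrt T"
proof (cases "T = \<infinity>")
  case True
  then show ?thesis using assms(2) by (simp add: esqrt_def ennreal_mult_top)
next
  case False
  then obtain t where t: "T = ennreal t" "0 \<le> t" by (cases T) auto
  then have "S \<le> ennreal (c * t)" using assms ennreal_mult[of c t] by simp
  then obtain s where s: "S = ennreal s" "0 \<le> s" "s \<le> c * t"
    using assms(2) t by (cases S rule: ennreal_cases) (auto simp: ennreal_le_iff top_unique)
  have "esqrt S = ennreal (sqrt s)" using s by (simp add: esqrt_def)
  also have "\<dots> \<le> ennreal (sqrt (c * t))" using s by (simp add: ennreal_leI)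
  also have "\<dots> = ennreal (sqrt c) * esqrt T"
    using assms(2) t by (simp add: esqrt_def real_sqrt_mult ennreal_mult)
  finally show ?thesis .
qed

lemma stopped_max_eq_SUP:
  "stopped_max M F \<nu> f y = (SUP k. if \<nu> y \<le> enat k then ennreal \<bar>real_cond_exp M (F k) f y\<bar> else 0)"
  unfolding stopped_max_def
proof (rule antisym)
  show "(SUP k\<in>{k. \<nu> y \<le> enat k}. ennreal \<bar>real_cond_exp M (F k) f y\<bar>)
    \<le> (SUP k. if \<nu> y \<le> enat k then ennreal \<bar>real_cond_exp M (F k) f y\<bar> else 0)"
    by (rule SUP_least) (rule SUP_upper2[where i=k for k], auto)
  show "(SUP k. if \<nu> y \<le> enat k then ennreal \<bar>real_cond_exp M (F k) f y\<bar> else 0)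
    \<le> (SUP k\<in>{k. \<nu> y \<le> enat k}. ennreal \<bar>real_cond_exp M (F k) f y\<bar>)"
    by (rule SUP_least) (auto intro: SUP_upper)
qed

lemma Pk_eq_INF:
  "Pk M F r n g x = (INF t\<in>\<rat>. if real_cond_exp M (F n) (indicator {y \<in> space M. g y > ereal t}) x \<le> r
     then ereal t else \<infinity>)"
  unfolding Pk_def
proof (rule antisym)
  show "Inf {ereal t |t. t \<in> \<rat> \<and> real_cond_exp M (F n) (indicator {y \<in> space M. ereal t < g y}) x \<le> r}
    \<le> (INF t\<in>\<rat>. if real_cond_exp M (F n) (indicator {y \<in> space M. ereal t < g y}) x \<le> r
      then ereal t else \<infinity>)"
    by (rule INF_greatest) (auto intro: Inf_lower)
  show "(INF t\<in>\<rat>. if real_cond_exp M (F n) (indicator {y \<in> space M. ereal t < g y}) x \<le> r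
      then ereal t else \<infinity>)
    \<le> Inf {ereal t |t. t \<in> \<rat> \<and> real_cond_exp M (F n) (indicator {y \<in> space M. ereal t < g y}) x \<le> r}"
  proof (rule Inf_greatest)
    fix z assume "z \<in> {ereal t |t. t \<in> \<rat> \<and>
      real_cond_exp M (F n) (indicator {y \<in> space M. ereal t < g y}) x \<le> r}"
    then obtain t where "z = ereal t" "t \<in> \<rat>"
      "real_cond_exp M (F n) (indicator {y \<in> space M. ereal t < g y}) x \<le> r" by blast
    then show "(INF t\<in>\<rat>. if real_cond_exp M (F n) (indicator {y \<in> space M. ereal t < g y}) x \<le> r
      then ereal t else \<infinity>) \<le> z"
      by (intro INF_lower2[where i=t]) auto
  qed
qed

lemma Pk_measurable: "Pk M F r n g \<in> borel_measurable (F n)"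
  unfolding Pk_eq_INF[abs_def] by (rule borel_measurable_INF) (auto simp: countable_rat)

section \<open>Conditional probabilities and stopping times\<close>

locale filtered_prob_space = prob_space M for M :: "'a measure" +
  fixes F :: "nat \<Rightarrow> 'a measure"
  assumes filtration_F: "filtration M F"
begin

lemma subalgebra_F: "subalgebra M (F k)"
  using filtration_F unfolding filtration_def by auto

lemma sigma_finite_subalgebra_F: "sigma_finite_subalgebra M (F k)"
  by (intro finite_measure_subalgebra_is_sigma_finite)
    (simp add: finite_measure_subalgebra_def finite_measure_subalgebra_axioms_def
      subalgebra_F finite_measure_axioms)

lemma space_F [simp]: "space (F k) = space M"
  using subalgebra_F[of k] unfolding subalgebra_def by auto

lemma sets_F_imp_sets: "A \<in> sets (F k) \<Longrightarrow> A \<in> sets M"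
  using subalgebra_F[of k] unfolding subalgebra_def by auto

lemma sets_F_mono: "i \<le> j \<Longrightarrow> sets (F i) \<subseteq> sets (F j)"
  by (rule lift_Suc_mono_le[of "\<lambda>k. sets (F k)"]) (use filtration_F in \<open>auto simp: filtration_def\<close>)

lemma measurable_F_mono: "i \<le> j \<Longrightarrow> h \<in> F i \<rightarrow>\<^sub>M N \<Longrightarrow> h \<in> F j \<rightarrow>\<^sub>M N"
  using measurable_from_subalg[of "F j" "F i"] sets_F_mono by (auto simp: subalgebra_def)

lemma measurable_F_imp_measurable: "h \<in> F i \<rightarrow>\<^sub>M N \<Longrightarrow> h \<in> M \<rightarrow>\<^sub>M N"
  using measurable_from_subalg[OF subalgebra_F] by blast

lemma integrable_indicator_real [simp]: "A \<in> sets M \<Longrightarrow> integrable M (indicator A :: 'a \<Rightarrow> real)"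
  by (simp add: emeasure_eq_measure)

lemma integrable_bounded_real:
  "g \<in> borel_measurable M \<Longrightarrow> AE x in M. \<bar>g x\<bar> \<le> C \<Longrightarrow> integrable M (g :: 'a \<Rightarrow> real)"
  by (rule integrable_const_bound[where B=C]) auto

lemma measure_Int_eq_set_integral_cond_exp:
  assumes D: "D \<in> sets (F k)" and H: "H \<in> sets M"
  shows "measure M (D \<inter> H) = (\<integral>x\<in>D. real_cond_exp M (F k) (indicator H) x \<partial>M)"
proof -
  interpret sigma_finite_subalgebra M "F k" by (rule sigma_finite_subalgebra_F)
  have "measure M (D \<inter> H) = (\<integral>x\<in>D. indicator H x \<partial>M)"
    using D H sets_F_imp_sets unfolding set_lebesgue_integral_def
    by (simp add: indicator_inter_arith[symmetric] del: indicator_inter_arith)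
  also have "\<dots> = (\<integral>x\<in>D. real_cond_exp M (F k) (indicator H) x \<partial>M)"
    using H D by (intro real_cond_exp_intA) auto
  finally show ?thesis .
qed

lemma set_integrable_cond_exp_indicator:
  "D \<in> sets (F k) \<Longrightarrow> H \<in> sets M \<Longrightarrow> set_integrable M D (real_cond_exp M (F k) (indicator H))"
  unfolding set_integrable_def
  using sigma_finite_subalgebra.real_cond_exp_int(1)[OF sigma_finite_subalgebra_F]
  by (intro integrable_mult_indicator) (auto dest: sets_F_imp_sets)

lemma set_integrable_const_real: "D \<in> sets M \<Longrightarrow> set_integrable M D (\<lambda>x. c :: real)"
  unfolding set_integrable_def by (intro integrable_mult_indicator) auto

lemma measure_Int_le_if_cond_exp_le:
  assumes "D \<in> sets (F k)" "H \<in> sets M"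
    and "AE x in M. x \<in> D \<longrightarrow> real_cond_exp M (F k) (indicator H) x \<le> c"
  shows "measure M (D \<inter> H) \<le> c * measure M D"
proof -
  have "measure M (D \<inter> H) \<le> (\<integral>x\<in>D. c \<partial>M)"
    unfolding measure_Int_eq_set_integral_cond_exp[OF assms(1,2)] using assms
    by (intro set_integral_mono_AE set_integrable_cond_exp_indicator set_integrable_const_real)
      (auto dest: sets_F_imp_sets)
  then show ?thesis using assms(1) by (simp add: set_integral_const sets_F_imp_sets emeasure_eq_measure mult.commute)
qed

lemma measure_Int_ge_if_cond_exp_ge:
  assumes "D \<in> sets (F k)" "H \<in> sets M"
    and "AE x in M. x \<in> D \<longrightarrow> c \<le> real_cond_exp M (F k) (indicator H) x"
  shows "c * measure M D \<le> measure M (D \<inter> H)"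
proof -
  have "(\<integral>x\<in>D. c \<partial>M) \<le> measure M (D \<inter> H)"
    unfolding measure_Int_eq_set_integral_cond_exp[OF assms(1,2)] using assms
    by (intro set_integral_mono_AE set_integrable_cond_exp_indicator set_integrable_const_real)
      (auto dest: sets_F_imp_sets)
  then show ?thesis using assms(1) by (simp add: set_integral_const sets_F_imp_sets emeasure_eq_measure mult.commute)
qed

lemma AE_cond_exp_le_if_measure_Int_le:
  assumes D: "D \<in> sets (F k)" and H: "H \<in> sets M"
    and le: "\<And>D'. D' \<in> sets (F k) \<Longrightarrow> D' \<subseteq> D \<Longrightarrow> measure M (D' \<inter> H) \<le> c * measure M D'"
  shows "AE x in M. x \<in> D \<longrightarrow> real_cond_exp M (F k) (indicator H) x \<le> c"
proof -
  define h where "h = real_cond_exp M (F k) (indicator H)"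
  have [measurable]: "h \<in> borel_measurable (F k)" unfolding h_def by simp
  define D' where "D' = D \<inter> {x \<in> space (F k). c < h x}"
  have D': "D' \<in> sets (F k)" unfolding D'_def using D by measurable
  have D'M: "D' \<in> sets M" using D' by (rule sets_F_imp_sets)
  define g where "g x = indicator D' x * (h x - c)" for x
  have int: "set_integrable M D' (\<lambda>x. h x - c)"
    using set_integrable_cond_exp_indicator[OF D' H] set_integrable_const_real[OF D'M]
    unfolding h_def by (rule set_integral_diff(1))
  have g_nonneg: "0 \<le> g x" for x
    unfolding g_def D'_def by (auto simp: indicator_def)
  have "integral\<^sup>L M g = (\<integral>x\<in>D'. h x - c \<partial>M)"
    unfolding g_def set_lebesgue_integral_def by simp
  also have "\<dots> = (\<integral>x\<in>D'. h x \<partial>M) - (\<integral>x\<in>D'. c \<partial>M)"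
    using set_integrable_cond_exp_indicator[OF D' H] set_integrable_const_real[OF D'M]
    unfolding h_def by (rule set_integral_diff(2))
  also have "\<dots> = measure M (D' \<inter> H) - c * measure M D'"
    using D'M unfolding measure_Int_eq_set_integral_cond_exp[OF D' H] h_def
    by (simp add: set_integral_const emeasure_eq_measure)
  also have "\<dots> \<le> 0" using le[OF D'] unfolding D'_def by auto
  moreover have "0 \<le> integral\<^sup>L M g" using g_nonneg by (simp add: integral_nonneg_AE)
  ultimately have "integral\<^sup>L M g = 0" by simp
  then have "AE x in M. g x = 0"
    using int g_nonneg unfolding set_integrable_def g_def
    by (subst integral_nonneg_eq_0_iff_AE[symmetric]) auto
  moreover have "D \<subseteq> space M" using sets.sets_into_space[OF D] by simp
  ultimately show ?thesis
    by (auto elim!: eventually_mono simp: g_def D'_def h_def indicator_def split: if_splits)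
qed

lemma AE_cond_exp_indicator_space: "AE x in M. real_cond_exp M (F n) (indicator (space M)) x = 1"
proof -
  interpret sigma_finite_subalgebra M "F n" by (rule sigma_finite_subalgebra_F)
  have "AE x in M. real_cond_exp M (F n) (indicator (space M)) x = indicator (space M) x"
    using borel_measurable_indicator[OF sets.top[of "F n"]] by (intro real_cond_exp_F_meas) auto
  then show ?thesis using AE_space by eventually_elim simp
qed

lemma AE_cond_exp_indicator_null:
  assumes "H \<in> sets M" "AE x in M. x \<notin> H"
  shows "AE x in M. real_cond_exp M (F n) (indicator H) x = 0"
proof -
  interpret sigma_finite_subalgebra M "F n" by (rule sigma_finite_subalgebra_F)
  have "AE x in M. real_cond_exp M (F n) (indicator H) x = real_cond_exp M (F n) (\<lambda>x. 0) x"
    using assms by (intro real_cond_exp_cong) (auto elim!: eventually_mono simp: indicator_def)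
  moreover have "AE x in M. real_cond_exp M (F n) (\<lambda>x. 0) x = 0"
    by (rule real_cond_exp_F_meas) auto
  ultimately show ?thesis by eventually_elim simp
qed

lemma stopping_time_enat_eq_sets:
  "stopping_time_enat M F \<nu> \<Longrightarrow> {x\<in>space M. \<nu> x = enat n} \<in> sets (F n)"
  unfolding stopping_time_enat_def by auto

lemma stopping_time_enat_le_sets:
  assumes "stopping_time_enat M F \<nu>"
  shows "{x\<in>space M. \<nu> x \<le> enat k} \<in> sets (F k)"
proof -
  have "{x\<in>space M. \<nu> x \<le> enat k} = (\<Union>i\<le>k. {x\<in>space M. \<nu> x = enat i})"
    by (auto simp: enat_ile) (metis atMost_iff enat_ile enat_ord_simps(1))
  also have "\<dots> \<in> sets (F k)"
    using stopping_time_enat_eq_sets[OF assms] sets_F_mono by (intro sets.finite_UN) auto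
  finally show ?thesis .
qed

lemma stopping_time_enat_Suc_le_sets:
  assumes "stopping_time_enat M F \<nu>"
  shows "{x\<in>space M. enat (Suc k) \<le> \<nu> x} \<in> sets (F k)"
proof -
  have "{x\<in>space M. enat (Suc k) \<le> \<nu> x} = space (F k) - {x\<in>space M. \<nu> x \<le> enat k}"
    by (auto simp: Suc_ile_eq not_le)
  then show ?thesis using sets.compl_sets[OF stopping_time_enat_le_sets[OF assms, of k]] by simp
qed

lemma stopping_time_enat_ge_sets:
  assumes "stopping_time_enat M F \<nu>"
  shows "{x\<in>space M. enat k \<le> \<nu> x} \<in> sets (F k)"
proof (cases k)
  case 0
  then show ?thesis using sets.top[of "F k"] by (simp add: zero_enat_def[symmetric])
next
  case (Suc k')
  then show ?thesis using stopping_time_enat_Suc_le_sets[OF assms, of k'] sets_F_mono[of k' k] by auto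
qed

lemma stopping_time_enat_measurable:
  assumes "stopping_time_enat M F \<nu>"
  shows "\<nu> \<in> M \<rightarrow>\<^sub>M count_space UNIV"
proof -
  have eq: "{x\<in>space M. \<nu> x = enat n} \<in> sets M" for n
    using stopping_time_enat_eq_sets[OF assms] by (rule sets_F_imp_sets)
  have "\<nu> -` {a} \<inter> space M \<in> sets M" for a
  proof (cases a)
    case (enat n)
    then show ?thesis using eq[of n] by (simp add: vimage_def Int_def conj_commute)
  next
    case infinity
    then have "\<nu> -` {a} \<inter> space M = space M - (\<Union>n. {x\<in>space M. \<nu> x = enat n})" by auto
    then show ?thesis using eq by auto
  qed
  then show ?thesis by (subst measurable_count_space_eq_countable) auto
qed

lemma stopping_time_enat_pred:
  "stopping_time_enat M F \<nu> \<Longrightarrow> Measurable.pred M (\<lambda>x. P (\<nu> x))"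
  using measurable_compose[OF stopping_time_enat_measurable, of \<nu> "\<lambda>e. P e" "count_space UNIV"]
  by auto

lemma fin_set_sets: "stopping_time_enat M F \<nu> \<Longrightarrow> fin_set M \<nu> \<in> sets M"
  unfolding fin_set_def using stopping_time_enat_pred[of \<nu> "\<lambda>e. e < \<infinity>"] by (simp add: pred_def)

lemma stopping_time_enat_zero: "stopping_time_enat M F (\<lambda>_. 0)"
  unfolding stopping_time_enat_def
proof
  fix k
  have "{x \<in> space M. (0::enat) = enat k} = (if k = 0 then space (F k) else {})"
    by (auto simp: zero_enat_def)
  then show "{x \<in> space M. (0::enat) = enat k} \<in> sets (F k)" by (metis sets.empty_sets sets.top)
qed

end

locale regular_filtered_prob_space = filtered_prob_space +
  fixes R :: real
  assumes regular_F: "regular M F R"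
begin

lemma regular_ge_1: "1 \<le> R"
proof -
  interpret S1: sigma_finite_subalgebra M "F 1" by (rule sigma_finite_subalgebra_F)
  interpret S0: sigma_finite_subalgebra M "F 0" by (rule sigma_finite_subalgebra_F)
  have "AE x in M. real_cond_exp M (F 1) (\<lambda>x. 1) x \<le> R * real_cond_exp M (F 0) (\<lambda>x. 1) x"
    using regular_F unfolding regular_def by (auto dest!: spec[of _ "\<lambda>x. 1"] spec[of _ 1])
  moreover have "AE x in M. real_cond_exp M (F 1) (\<lambda>x. 1) x = 1"
    by (rule S1.real_cond_exp_F_meas) auto
  moreover have "AE x in M. real_cond_exp M (F 0) (\<lambda>x. 1) x = 1"
    by (rule S0.real_cond_exp_F_meas) auto
  ultimately have "AE x in M. 1 \<le> R" by eventually_elim simp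
  then show ?thesis using AE_False by (cases "1 \<le> R") auto
qed

end

section \<open>The stopping rule\<close>

locale sparse_construction = regular_filtered_prob_space +
  fixes f :: "'a \<Rightarrow> real" and B :: real
  assumes f_measurable [measurable]: "f \<in> borel_measurable M"
    and f_bounded: "\<And>x. x \<in> space M \<Longrightarrow> \<bar>f x\<bar> \<le> B"
begin

(* thr caps the conditional probability of exceeding the level and K the square function
   increment before the next stop; r makes the two stopping events add up to the sparseness
   ratio 1/2. *)
definition "r = 1 / (2 * (R + 3))"
definition "thr = 1 / (R + 1)"
definition "K = R + 3"

lemma r_pos: "0 < r" and r_le_thr: "r \<le> thr" and thr_pos: "0 < thr"
  and R_thr_less_1: "R * thr < 1" and K_pos: "0 < K"
  using regular_ge_1 by (auto simp: r_def thr_def K_def field_simps)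

lemma r_less_1: "r < 1"
  using r_le_thr R_thr_less_1 regular_ge_1 thr_pos by (smt (verit) mult_le_cancel_right1)

lemma r_div_thr_plus_inverse_K: "r / thr + 1 / K = 1 / 2"
proof -
  have "0 < R + 1" "0 < R + 3" using regular_ge_1 by auto
  then have "r / thr = (R + 1) / (2 * (R + 3))" by (simp add: r_def thr_def field_simps)
  with \<open>0 < R + 3\<close> show ?thesis by (simp add: K_def field_simps)
qed

abbreviation "E k \<equiv> real_cond_exp M (F k) f"

lemma integrable_f: "integrable M f"
  using f_bounded by (intro integrable_const_bound[where B=B]) auto

lemma AE_abs_E_le: "AE x in M. \<forall>k. \<bar>E k x\<bar> \<le> B"
proof -
  have "AE x in M. \<bar>E k x\<bar> \<le> B" for k
  proof -
    interpret sigma_finite_subalgebra M "F k" by (rule sigma_finite_subalgebra_F)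
    have "AE x in M. E k x \<le> B"
      by (rule real_cond_exp_le_c[OF integrable_f]) (auto intro!: AE_I2 dest: f_bounded simp: abs_le_iff)
    moreover have "AE x in M. -B \<le> E k x"
      by (rule real_cond_exp_ge_c[OF integrable_f]) (auto intro!: AE_I2 dest: f_bounded simp: abs_le_iff)
    ultimately show ?thesis by eventually_elim auto
  qed
  then show ?thesis by (simp add: AE_all_countable)
qed

lemma mdiff_measurable: "mdiff M F f m \<in> borel_measurable (F m)"
proof (cases m)
  case (Suc m')
  have "E m' \<in> borel_measurable (F m)" using Suc by (intro measurable_F_mono[of m' m]) auto
  then show ?thesis using Suc by (simp add: mdiff.simps(2)[abs_def])
qed (simp add: mdiff.simps(1)[abs_def])

lemma AE_mdiff_square_le: "AE x in M. \<forall>m. (mdiff M F f m x)\<^sup>2 \<le> (2 * B)\<^sup>2"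
  using AE_abs_E_le
proof eventually_elim
  case (elim x)
  have "\<bar>mdiff M F f m x\<bar> \<le> \<bar>2 * B\<bar>" for m
  proof (cases m)
    case 0
    then show ?thesis using elim[rule_format, of 0] by simp
  next
    case (Suc m')
    then show ?thesis
      using elim[rule_format, of m] elim[rule_format, of m'] abs_triangle_ineq4[of "E m x" "E m' x"]
      by simp
  qed
  then show ?case by (simp add: abs_le_square_iff)
qed

(* Pk only tests rational thresholds, hence a rational bound for f. *)
definition "B_ceil = real_of_int \<lceil>\<bar>B\<bar>\<rceil>"

lemma B_ceil_rat: "B_ceil \<in> \<rat>" and abs_B_le_B_ceil: "\<bar>B\<bar> \<le> B_ceil" and B_ceil_nonneg: "0 \<le> B_ceil"
  unfolding B_ceil_def by auto

definition "Mf \<nu> y = enn2ereal (stopped_max M F \<nu> f y)"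

definition "level \<nu> = Pnu M F r \<nu> (Mf \<nu>)"

definition "rlevel \<nu> x = real_of_ereal (level \<nu> x)"

definition "exceed_set \<nu> = {y \<in> space M. level \<nu> y < Mf \<nu> y}"

definition "exceed_prob \<nu> k = real_cond_exp M (F k) (indicator (exceed_set \<nu>))"

definition "sq_increment n k x = (\<Sum>m\<in>{n<..k}. (mdiff M F f m x)\<^sup>2)"

(* On {nu = n} the level of nu is Pk n; stating the rule with Pk n makes it F k-measurable. *)
definition "stop_cond \<nu> n k x \<longleftrightarrow>
  thr < exceed_prob \<nu> k x \<or> K * (real_of_ereal (Pk M F r n (Mf \<nu>) x))\<^sup>2 < sq_increment n k x"

definition next_stop :: "('a \<Rightarrow> enat) \<Rightarrow> 'a \<Rightarrow> enat" where
  "next_stop \<nu> x = (case \<nu> x of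
     enat n \<Rightarrow> if \<exists>k>n. stop_cond \<nu> n k x then enat (LEAST k. n < k \<and> stop_cond \<nu> n k x) else \<infinity>
   | \<infinity> \<Rightarrow> \<infinity>)"

definition "stopped_sq_increment \<nu> n N x =
  (\<Sum>m\<in>{n<..N}. if enat m \<le> next_stop \<nu> x then (mdiff M F f m x)\<^sup>2 else 0)"

lemma Mf_measurable:
  assumes "stopping_time_enat M F \<nu>"
  shows "Mf \<nu> \<in> borel_measurable M"
proof -
  have [measurable]: "Measurable.pred M (\<lambda>y. \<nu> y \<le> enat k)" for k
    using stopping_time_enat_pred[OF assms] .
  have "(\<lambda>y. stopped_max M F \<nu> f y) \<in> borel_measurable M"
    unfolding stopped_max_eq_SUP by measurable
  then show ?thesis unfolding Mf_def[abs_def] by measurable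
qed

lemma Mf_nonneg: "0 \<le> Mf \<nu> x"
  unfolding Mf_def by (simp add: enn2ereal_nonneg)

lemma abs_E_le_Mf: "\<nu> x \<le> enat k \<Longrightarrow> ereal \<bar>E k x\<bar> \<le> Mf \<nu> x"
proof -
  assume "\<nu> x \<le> enat k"
  then have "ennreal \<bar>E k x\<bar> \<le> stopped_max M F \<nu> f x"
    unfolding stopped_max_def by (auto intro: SUP_upper)
  then show ?thesis
    unfolding Mf_def using less_eq_ennreal.rep_eq by (fastforce simp: enn2ereal_ennreal)
qed

lemma AE_Mf_le: "AE x in M. Mf \<nu> x \<le> ereal B_ceil"
  using AE_abs_E_le
proof eventually_elim
  case (elim x)
  have "\<bar>E k x\<bar> \<le> B_ceil" for k
    using elim abs_B_le_B_ceil by (meson abs_ge_self order_trans)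
  then have "stopped_max M F \<nu> f x \<le> ennreal B_ceil"
    unfolding stopped_max_def by (auto intro!: SUP_least ennreal_leI)
  then show ?case
    unfolding Mf_def using less_eq_ennreal.rep_eq B_ceil_def by (fastforce simp: enn2ereal_ennreal)
qed

lemma level_eq_Pk: "\<nu> x = enat n \<Longrightarrow> level \<nu> x = Pk M F r n (Mf \<nu>) x"
  unfolding level_def Pnu_def by simp

lemma level_infinity: "\<nu> x = \<infinity> \<Longrightarrow> level \<nu> x = 0"
  unfolding level_def Pnu_def by simp

lemma level_measurable:
  assumes "stopping_time_enat M F \<nu>"
  shows "level \<nu> \<in> borel_measurable M"
proof -
  have "(\<lambda>x. (\<lambda>i x. case i of enat k \<Rightarrow> Pk M F r k (Mf \<nu>) x | \<infinity> \<Rightarrow> 0) (\<nu> x) x) \<in> borel_measurable M"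
  proof (rule measurable_compose_countable[OF _ stopping_time_enat_measurable[OF assms]])
    fix i :: enat
    show "(\<lambda>x. case i of enat k \<Rightarrow> Pk M F r k (Mf \<nu>) x | \<infinity> \<Rightarrow> 0) \<in> borel_measurable M"
      by (cases i) (auto intro: measurable_F_imp_measurable[OF Pk_measurable])
  qed
  then show ?thesis unfolding level_def Pnu_def[abs_def] by simp
qed

lemma rlevel_measurable: "stopping_time_enat M F \<nu> \<Longrightarrow> rlevel \<nu> \<in> borel_measurable M"
  unfolding rlevel_def[abs_def] using level_measurable by measurable

lemma exceed_set_sets: "stopping_time_enat M F \<nu> \<Longrightarrow> exceed_set \<nu> \<in> sets M"
  unfolding exceed_set_def using level_measurable Mf_measurable by measurable

lemma sq_increment_measurable: "sq_increment n k \<in> borel_measurable (F k)"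
  unfolding sq_increment_def[abs_def]
  using measurable_F_mono[OF _ mdiff_measurable] by (intro borel_measurable_sum) auto

lemma stop_cond_iff_level:
  "\<nu> x = enat n \<Longrightarrow>
    stop_cond \<nu> n k x \<longleftrightarrow> thr < exceed_prob \<nu> k x \<or> K * (rlevel \<nu> x)\<^sup>2 < sq_increment n k x"
  unfolding stop_cond_def rlevel_def by (simp add: level_eq_Pk)

lemma stop_cond_pred: "n \<le> k \<Longrightarrow> k \<le> j \<Longrightarrow> Measurable.pred (F j) (stop_cond \<nu> n k)"
  unfolding stop_cond_def[abs_def] exceed_prob_def
  using measurable_F_mono[OF _ borel_measurable_cond_exp] measurable_F_mono[OF _ Pk_measurable]
    measurable_F_mono[OF _ sq_increment_measurable]
  by measurable

lemma next_stop_infinity: "\<nu> x = \<infinity> \<Longrightarrow> next_stop \<nu> x = \<infinity>"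
  unfolding next_stop_def by simp

lemma next_stop_eq_enat_iff:
  "next_stop \<nu> x = enat k \<longleftrightarrow>
    (\<exists>n<k. \<nu> x = enat n \<and> stop_cond \<nu> n k x \<and> (\<forall>m. n < m \<and> m < k \<longrightarrow> \<not> stop_cond \<nu> n m x))"
proof
  assume k: "next_stop \<nu> x = enat k"
  then obtain n where n: "\<nu> x = enat n" by (cases "\<nu> x") (auto simp: next_stop_infinity)
  with k have ex: "\<exists>k>n. stop_cond \<nu> n k x" and "k = (LEAST k. n < k \<and> stop_cond \<nu> n k x)"
    unfolding next_stop_def by (auto split: if_splits)
  then show "\<exists>n<k. \<nu> x = enat n \<and> stop_cond \<nu> n k x \<and> (\<forall>m. n < m \<and> m < k \<longrightarrow> \<not> stop_cond \<nu> n m x)"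
    using n LeastI_ex[OF ex] not_less_Least[of _ "\<lambda>k. n < k \<and> stop_cond \<nu> n k x"] by blast
next
  assume "\<exists>n<k. \<nu> x = enat n \<and> stop_cond \<nu> n k x \<and> (\<forall>m. n < m \<and> m < k \<longrightarrow> \<not> stop_cond \<nu> n m x)"
  then obtain n where n: "n < k" "\<nu> x = enat n" "stop_cond \<nu> n k x"
    "\<forall>m. n < m \<and> m < k \<longrightarrow> \<not> stop_cond \<nu> n m x" by blast
  have "(LEAST k. n < k \<and> stop_cond \<nu> n k x) = k"
    by (rule Least_equality) (use n in \<open>auto simp: not_less[symmetric]\<close>)
  then show "next_stop \<nu> x = enat k" using n unfolding next_stop_def by auto
qed

lemma next_stop_gt:
  assumes "\<nu> x = enat n"
  shows "enat n < next_stop \<nu> x"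
proof (cases "next_stop \<nu> x")
  case (enat k)
  then have "\<exists>n'<k. \<nu> x = enat n'" by (auto simp: next_stop_eq_enat_iff)
  with enat assms show ?thesis by auto
qed simp

lemma next_stop_ge: "\<nu> x \<le> next_stop \<nu> x"
  by (cases "\<nu> x") (auto dest: next_stop_gt[THEN less_imp_le] simp: next_stop_infinity)

lemma not_stop_cond_before_next_stop:
  assumes "\<nu> x = enat n" "n < m" "enat m < next_stop \<nu> x"
  shows "\<not> stop_cond \<nu> n m x"
proof
  assume "stop_cond \<nu> n m x"
  with assms have "(LEAST k. n < k \<and> stop_cond \<nu> n k x) \<le> m" "\<exists>k>n. stop_cond \<nu> n k x"
    by (auto intro: Least_le)
  then show False using assms unfolding next_stop_def by simp
qed

lemma stop_cond_at_next_stop: "\<nu> x = enat n \<Longrightarrow> next_stop \<nu> x = enat k \<Longrightarrow> stop_cond \<nu> n k x"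
  by (auto simp: next_stop_eq_enat_iff)

lemma stopping_time_next_stop:
  assumes "stopping_time_enat M F \<nu>"
  shows "stopping_time_enat M F (next_stop \<nu>)"
  unfolding stopping_time_enat_def
proof
  fix k
  have "{x \<in> space M. next_stop \<nu> x = enat k} = (\<Union>n<k. {x\<in>space M. \<nu> x = enat n} \<inter>
      {x\<in>space (F k). stop_cond \<nu> n k x \<and> (\<forall>m\<in>{n<..<k}. \<not> stop_cond \<nu> n m x)})"
    unfolding next_stop_eq_enat_iff by auto
  also have "\<dots> \<in> sets (F k)"
  proof (intro sets.finite_UN sets.Int ballI)
    fix n assume n: "n \<in> {..<k}"
    show "{x\<in>space M. \<nu> x = enat n} \<in> sets (F k)"
      using stopping_time_enat_eq_sets[OF assms, of n] sets_F_mono[of n k] n by auto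
    have "Measurable.pred (F k) (\<lambda>x. stop_cond \<nu> n k x \<and> (\<forall>m\<in>{n<..<k}. \<not> stop_cond \<nu> n m x))"
      using n stop_cond_pred by (intro pred_intros_logic pred_intros_countable_bounded) auto
    then show "{x\<in>space (F k). stop_cond \<nu> n k x \<and> (\<forall>m\<in>{n<..<k}. \<not> stop_cond \<nu> n m x)} \<in> sets (F k)"
      by (rule Measurable.predE)
  qed auto
  finally show "{x \<in> space M. next_stop \<nu> x = enat k} \<in> sets (F k)" .
qed

lemma AE_Pk_Mf_bounds:
  assumes st: "stopping_time_enat M F \<nu>"
  shows "AE x in M. 0 \<le> Pk M F r n (Mf \<nu>) x \<and> Pk M F r n (Mf \<nu>) x \<le> ereal B_ceil"
proof -
  have [measurable]: "Mf \<nu> \<in> borel_measurable M" using Mf_measurable[OF st] .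
  have "AE x in M. x \<notin> {y \<in> space M. ereal B_ceil < Mf \<nu> y}"
    using AE_Mf_le[of \<nu>] by (auto elim!: eventually_mono)
  then have null: "AE x in M. real_cond_exp M (F n) (indicator {y \<in> space M. ereal B_ceil < Mf \<nu> y}) x = 0"
    by (intro AE_cond_exp_indicator_null) measurable
  have all: "{y \<in> space M. ereal t < Mf \<nu> y} = space M" if "t < 0" for t
    using that Mf_nonneg[of \<nu>] by (auto intro: less_le_trans[of _ 0])
  show ?thesis using null AE_cond_exp_indicator_space[of n]
  proof eventually_elim
    case (elim x)
    have "Pk M F r n (Mf \<nu>) x \<le> ereal B_ceil"
      unfolding Pk_def by (rule Inf_lower) (use elim B_ceil_rat r_pos in auto)
    moreover have "0 \<le> Pk M F r n (Mf \<nu>) x"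
      unfolding Pk_def
    proof (rule Inf_greatest)
      fix z assume "z \<in> {ereal t |t. t \<in> \<rat> \<and>
        real_cond_exp M (F n) (indicator {y \<in> space M. ereal t < Mf \<nu> y}) x \<le> r}"
      then obtain t where "z = ereal t"
        "real_cond_exp M (F n) (indicator {y \<in> space M. ereal t < Mf \<nu> y}) x \<le> r" by blast
      then show "0 \<le> z" using all[of t] elim r_less_1 by (cases "t < 0") auto
    qed
    ultimately show ?case by simp
  qed
qed

lemma AE_level_real:
  assumes "stopping_time_enat M F \<nu>"
  shows "AE x in M. level \<nu> x = ereal (rlevel \<nu> x) \<and> 0 \<le> rlevel \<nu> x \<and> rlevel \<nu> x \<le> B_ceil"
proof -
  have "AE x in M. \<forall>n. 0 \<le> Pk M F r n (Mf \<nu>) x \<and> Pk M F r n (Mf \<nu>) x \<le> ereal B_ceil"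
    using AE_Pk_Mf_bounds[OF assms] by (simp add: AE_all_countable)
  then show ?thesis
  proof eventually_elim
  case (elim x)
  then have "0 \<le> level \<nu> x \<and> level \<nu> x \<le> ereal B_ceil"
    using B_ceil_nonneg by (cases "\<nu> x") (auto simp: level_eq_Pk level_infinity)
  then show ?case unfolding rlevel_def by (cases "level \<nu> x") auto
  qed
qed

lemma AE_cond_exp_Mf_gt_le_r:
  assumes st: "stopping_time_enat M F \<nu>" and q: "q \<in> \<rat>"
  shows "AE x in M. Pk M F r n (Mf \<nu>) x < ereal q \<longrightarrow>
    real_cond_exp M (F n) (indicator {y\<in>space M. ereal q < Mf \<nu> y}) x \<le> r"
proof -
  interpret sigma_finite_subalgebra M "F n" by (rule sigma_finite_subalgebra_F)
  have [measurable]: "Mf \<nu> \<in> borel_measurable M" using Mf_measurable[OF st] .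
  define c where "c s = real_cond_exp M (F n) (indicator {y\<in>space M. ereal s < Mf \<nu> y})" for s
  have "AE x in M. s \<le> q \<longrightarrow> c q x \<le> c s x" for s
  proof (cases "s \<le> q")
    case True
    have "AE x in M. c q x \<le> c s x" unfolding c_def
      by (rule real_cond_exp_mono)
        (use True in \<open>auto intro!: AE_I2 simp: indicator_def intro: le_less_trans[of "ereal s" "ereal q"]\<close>)
    then show ?thesis by auto
  qed simp
  then have "AE x in M. \<forall>s\<in>\<rat>. s \<le> q \<longrightarrow> c q x \<le> c s x"
    by (simp add: AE_ball_countable countable_rat)
  then show ?thesis
  proof eventually_elim
    case (elim x)
    show ?case
    proof
      assume "Pk M F r n (Mf \<nu>) x < ereal q"
      then obtain s where "s \<in> \<rat>" "c s x \<le> r" "s \<le> q"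
        unfolding Pk_def c_def by (auto simp: Inf_less_iff)
      with elim show "real_cond_exp M (F n) (indicator {y\<in>space M. ereal q < Mf \<nu> y}) x \<le> r"
        unfolding c_def by fastforce
    qed
  qed
qed

lemma measure_Mf_exceeds_dyadic_le:
  assumes st: "stopping_time_enat M F \<nu>" and D: "D \<in> sets (F n)"
    and p [measurable]: "p \<in> borel_measurable (F n)"
    and Pk_eq: "\<And>y. y \<in> D \<Longrightarrow> Pk M F r n (Mf \<nu>) y = ereal (p y) \<and> 0 \<le> p y"
  shows "measure M (D \<inter> {y\<in>space M. ereal (p y + 1 / 2^m) < Mf \<nu> y}) \<le> r * measure M D"
proof -
  have [measurable]: "Mf \<nu> \<in> borel_measurable M" using Mf_measurable[OF st] .
  have [measurable]: "p \<in> borel_measurable M" by (rule measurable_F_imp_measurable[OF p])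
  define A where "A k = D \<inter> {y\<in>space (F n). real k \<le> p y * 2^m \<and> p y * 2^m < real k + 1}" for k :: nat
  have A: "A k \<in> sets (F n)" for k unfolding A_def using D by measurable
  have A_floor: "y \<in> A k \<longleftrightarrow> y \<in> D \<and> k = nat \<lfloor>p y * 2^m\<rfloor>" for y k
    using Pk_eq[of y] sets.sets_into_space[OF D]
    by (auto simp: A_def floor_eq_iff intro!: nat_eq_iff2[THEN iffD2])
  have disj: "disjoint_family A" unfolding disjoint_family_on_def by (auto simp: A_floor)
  have cover: "(\<Union>k. A k) = D" by (auto simp: A_floor)
  have piece: "1 * measure M (A k \<inter> {y\<in>space M. ereal (p y + 1 / 2^m) < Mf \<nu> y})
      \<le> r * measure M (A k \<inter> space M)" for k
  proof -
    define q where "q = (real k + 1) / 2^m"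
    have q_rat: "q \<in> \<rat>" unfolding q_def by simp
    have H_q: "{y\<in>space M. ereal q < Mf \<nu> y} \<in> sets M" by measurable
    have "A k \<inter> {y\<in>space M. ereal (p y + 1 / 2^m) < Mf \<nu> y} \<subseteq> A k \<inter> {y\<in>space M. ereal q < Mf \<nu> y}"
    proof safe
      fix y assume "y \<in> A k" "ereal (p y + 1 / 2^m) < Mf \<nu> y"
      moreover from \<open>y \<in> A k\<close> have "q \<le> p y + 1 / 2^m"
        unfolding A_def q_def by (auto simp: field_simps)
      ultimately show "ereal q < Mf \<nu> y" by (metis ereal_less_eq(3) order_le_less_trans)
    qed
    then have "measure M (A k \<inter> {y\<in>space M. ereal (p y + 1 / 2^m) < Mf \<nu> y})
        \<le> measure M (A k \<inter> {y\<in>space M. ereal q < Mf \<nu> y})"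
      by (rule finite_measure_mono) (use A[of k] H_q in \<open>auto dest: sets_F_imp_sets\<close>)
    also have "\<dots> \<le> r * measure M (A k)"
    proof (rule measure_Int_le_if_cond_exp_le[OF A H_q])
      show "AE x in M. x \<in> A k \<longrightarrow>
          real_cond_exp M (F n) (indicator {y \<in> space M. ereal q < Mf \<nu> y}) x \<le> r"
        using AE_cond_exp_Mf_gt_le_r[OF st q_rat, of n]
        by eventually_elim (auto simp: q_def A_def Pk_eq field_simps)
    qed
    finally show ?thesis using sets.sets_into_space[OF A[of k]] by (simp add: Int_absorb2)
  qed
  have "1 * measure M ((\<Union>k. A k) \<inter> {y\<in>space M. ereal (p y + 1 / 2^m) < Mf \<nu> y})
      \<le> r * measure M ((\<Union>k. A k) \<inter> space M)"
    using disj A piece by (intro scaled_measure_Int_UN_le) (auto dest: sets_F_imp_sets)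
  then show ?thesis unfolding cover using sets.sets_into_space[OF D] by (simp add: Int_absorb2)
qed

lemma measure_Mf_exceeds_le:
  assumes st: "stopping_time_enat M F \<nu>" and D: "D \<in> sets (F n)"
    and p [measurable]: "p \<in> borel_measurable (F n)"
    and Pk_eq: "\<And>y. y \<in> D \<Longrightarrow> Pk M F r n (Mf \<nu>) y = ereal (p y) \<and> 0 \<le> p y"
  shows "measure M (D \<inter> {y\<in>space M. ereal (p y) < Mf \<nu> y}) \<le> r * measure M D"
proof -
  have [measurable]: "Mf \<nu> \<in> borel_measurable M" using Mf_measurable[OF st] .
  have [measurable]: "p \<in> borel_measurable M" by (rule measurable_F_imp_measurable[OF p])
  define X where "X m = D \<inter> {y\<in>space M. ereal (p y + 1 / 2^m) < Mf \<nu> y}" for m :: nat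
  have "D \<inter> {y\<in>space M. ereal (p y) < Mf \<nu> y} = (\<Union>m. X m)"
  proof (intro equalityI subsetI)
    fix y assume y: "y \<in> D \<inter> {y\<in>space M. ereal (p y) < Mf \<nu> y}"
    then have "ereal (p y) < Mf \<nu> y" by blast
    then obtain m where "ereal (p y + 1 / 2^m) < Mf \<nu> y"
    proof (cases "Mf \<nu> y")
      case (real v)
      then obtain m where "(1 / 2) ^ m < v - p y"
        using real_arch_pow_inv[of "v - p y" "1 / 2"] \<open>ereal (p y) < Mf \<nu> y\<close> by auto
      then show ?thesis using real that[of m] by (simp add: power_one_over)
    qed (use that in auto)
    then show "y \<in> (\<Union>m. X m)" using y unfolding X_def by auto
  next
    fix y assume "y \<in> (\<Union>m. X m)"
    then show "y \<in> D \<inter> {y\<in>space M. ereal (p y) < Mf \<nu> y}"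
      unfolding X_def by (auto intro: less_trans[of _ "ereal (p y + 1 / 2^_)"])
  qed
  also have "measure M (\<Union>m. X m) \<le> r * measure M D"
  proof (rule measure_UN_incseq_le)
    show "incseq X"
    proof (rule incseq_SucI)
      fix m
      show "X m \<subseteq> X (Suc m)"
      proof
        fix y assume "y \<in> X m"
        moreover have "ereal (p y + 1 / 2^Suc m) \<le> ereal (p y + 1 / 2^m)" by (simp add: frac_le)
        ultimately show "y \<in> X (Suc m)" unfolding X_def by (blast intro: order.strict_trans1)
      qed
    qed
    show "X m \<in> sets M" for m
      unfolding X_def using sets_F_imp_sets[OF D] by measurable
    show "measure M (X m) \<le> r * measure M D" for m
      unfolding X_def by (rule measure_Mf_exceeds_dyadic_le[OF st D p Pk_eq])
  qed
  finally show ?thesis .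
qed

lemma measure_exceed_set_le:
  assumes st: "stopping_time_enat M F \<nu>" and D: "D \<in> sets (F n)"
    and D_sub: "D \<subseteq> {x\<in>space M. \<nu> x = enat n}"
  shows "measure M (D \<inter> exceed_set \<nu>) \<le> r * measure M D"
proof -
  define P where "P = Pk M F r n (Mf \<nu>)"
  have [measurable]: "P \<in> borel_measurable (F n)" unfolding P_def by (rule Pk_measurable)
  define p where "p y = real_of_ereal (P y)" for y
  have p [measurable]: "p \<in> borel_measurable (F n)" unfolding p_def[abs_def] by measurable
  define D0 where "D0 = D \<inter> {y\<in>space (F n). 0 \<le> P y \<and> P y \<le> ereal B_ceil}"
  have D0: "D0 \<in> sets (F n)" unfolding D0_def using D by measurable
  have P_p: "P y = ereal (p y) \<and> 0 \<le> p y" if "y \<in> D0" for y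
    using that unfolding D0_def p_def by (cases "P y") auto
  have H: "{y\<in>space M. ereal (p y) < Mf \<nu> y} \<in> sets M"
    using measurable_F_imp_measurable[OF p] Mf_measurable[OF st] by measurable
  have "AE x in M. x \<in> D \<inter> exceed_set \<nu> \<longrightarrow> x \<in> D0 \<inter> {y\<in>space M. ereal (p y) < Mf \<nu> y}"
    using AE_Pk_Mf_bounds[OF st, of n] AE_space
  proof eventually_elim
    case (elim x)
    show ?case
    proof
      assume x: "x \<in> D \<inter> exceed_set \<nu>"
      then have "x \<in> D0" using elim D unfolding D0_def P_def by auto
      moreover have "level \<nu> x = P x" using x D_sub level_eq_Pk unfolding P_def by auto
      ultimately show "x \<in> D0 \<inter> {y\<in>space M. ereal (p y) < Mf \<nu> y}"
        using x P_p unfolding exceed_set_def by auto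
    qed
  qed
  then have "measure M (D \<inter> exceed_set \<nu>) \<le> measure M (D0 \<inter> {y\<in>space M. ereal (p y) < Mf \<nu> y})"
    using sets.Int[OF sets_F_imp_sets[OF D0] H] by (rule finite_measure_mono_AE)
  also have "\<dots> \<le> r * measure M D0"
    using D0 P_p unfolding P_def by (rule measure_Mf_exceeds_le[OF st _ p])
  also have "\<dots> \<le> r * measure M D"
    using r_pos D by (intro mult_left_mono finite_measure_mono) (auto simp: D0_def dest: sets_F_imp_sets)
  finally show ?thesis .
qed

lemma AE_exceed_prob_le_r:
  assumes st: "stopping_time_enat M F \<nu>"
  shows "AE x in M. \<nu> x = enat n \<longrightarrow> exceed_prob \<nu> n x \<le> r"
proof -
  have "AE x in M. x \<in> {x\<in>space M. \<nu> x = enat n} \<longrightarrow> exceed_prob \<nu> n x \<le> r"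
    unfolding exceed_prob_def
    using stopping_time_enat_eq_sets[OF st] exceed_set_sets[OF st] measure_exceed_set_le[OF st]
    by (intro AE_cond_exp_le_if_measure_Int_le) auto
  then show ?thesis using AE_space by eventually_elim auto
qed

(* Regularity keeps the exceedance probability from jumping over thr in a single step. *)
lemma AE_exceed_prob_le_before_next_stop:
  assumes st: "stopping_time_enat M F \<nu>"
  shows "AE x in M. \<nu> x = enat n \<and> n \<le> k \<and> enat k \<le> next_stop \<nu> x \<longrightarrow> exceed_prob \<nu> k x \<le> R * thr"
proof -
  have r_le: "r \<le> R * thr"
    using r_le_thr regular_ge_1 thr_pos by (smt (verit) mult_le_cancel_right1 mult.commute)
  consider "k \<le> n" | k' where "k = Suc k'" "n \<le> k'"
    by (metis less_Suc_eq_le not0_implies_Suc not_le not_less0)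
  then show ?thesis
  proof cases
    case 1
    show ?thesis using AE_exceed_prob_le_r[OF st, of n] by eventually_elim (use 1 r_le in auto)
  next
    case 2
    have "AE x in M. exceed_prob \<nu> k x \<le> R * exceed_prob \<nu> k' x"
      using regular_F[unfolded regular_def, rule_format, of "indicator (exceed_set \<nu>)" k]
        exceed_set_sets[OF st] 2
      unfolding exceed_prob_def by (auto intro: AE_I2)
    then show ?thesis using AE_exceed_prob_le_r[OF st, of n]
    proof eventually_elim
      case (elim x)
      show ?case
      proof safe
        assume x: "\<nu> x = enat n" "enat k \<le> next_stop \<nu> x"
        have "exceed_prob \<nu> k' x \<le> thr"
        proof (cases "k' = n")
          case True
          then show ?thesis using elim x r_le_thr by auto
        next
          case False
          then have "\<not> stop_cond \<nu> n k' x"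
            using x 2 by (intro not_stop_cond_before_next_stop) (auto simp: Suc_ile_eq)
          then show ?thesis by (simp add: stop_cond_def)
        qed
        then show "exceed_prob \<nu> k x \<le> R * thr"
          using elim regular_ge_1 by (smt (verit) mult_left_mono)
      qed
    qed
  qed
qed

lemma AE_abs_E_le_level:
  assumes st: "stopping_time_enat M F \<nu>"
  shows "AE x in M. \<forall>n k. \<nu> x = enat n \<and> n \<le> k \<and> enat k \<le> next_stop \<nu> x \<longrightarrow>
    ereal \<bar>E k x\<bar> \<le> level \<nu> x"
proof -
  have "AE x in M. \<nu> x = enat n \<and> n \<le> k \<and> enat k \<le> next_stop \<nu> x \<longrightarrow> ereal \<bar>E k x\<bar> \<le> level \<nu> x"
    for n k
  proof (cases "n \<le> k")
    case True
    define A where "A = {x\<in>space M. \<nu> x = enat n \<and> enat k \<le> next_stop \<nu> x \<and>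
      Pk M F r n (Mf \<nu>) x < ereal \<bar>E k x\<bar>}"
    have A: "A \<in> sets (F k)"
    proof -
      have Pk_F: "Pk M F r n (Mf \<nu>) \<in> borel_measurable (F k)"
        using measurable_F_mono[OF True Pk_measurable[of M F r n "Mf \<nu>"]] .
      have "{x\<in>space M. \<nu> x = enat n} \<in> sets (F k)"
        using stopping_time_enat_eq_sets[OF st] sets_F_mono[OF True] by auto
      moreover have "{x\<in>space M. enat k \<le> next_stop \<nu> x} \<in> sets (F k)"
        by (rule stopping_time_enat_ge_sets[OF stopping_time_next_stop[OF st]])
      moreover have "{x\<in>space (F k). Pk M F r n (Mf \<nu>) x < ereal \<bar>E k x\<bar>} \<in> sets (F k)"
        using Pk_F by (rule borel_measurable_less) (intro borel_measurable_ereal borel_measurable_abs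
          borel_measurable_cond_exp)
      ultimately have "{x\<in>space M. \<nu> x = enat n} \<inter> {x\<in>space M. enat k \<le> next_stop \<nu> x} \<inter>
          {x\<in>space (F k). Pk M F r n (Mf \<nu>) x < ereal \<bar>E k x\<bar>} \<in> sets (F k)"
        by (intro sets.Int)
      also have "{x\<in>space M. \<nu> x = enat n} \<inter> {x\<in>space M. enat k \<le> next_stop \<nu> x} \<inter>
          {x\<in>space (F k). Pk M F r n (Mf \<nu>) x < ereal \<bar>E k x\<bar>} = A"
        unfolding A_def space_F by blast
      finally show ?thesis .
    qed
    have "A \<subseteq> exceed_set \<nu>"
    proof
      fix x assume x: "x \<in> A"
      then have "level \<nu> x < ereal \<bar>E k x\<bar>" by (simp add: A_def level_eq_Pk)
      also have "\<dots> \<le> Mf \<nu> x" using x True by (intro abs_E_le_Mf) (auto simp: A_def)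
      finally show "x \<in> exceed_set \<nu>" using x by (simp add: A_def exceed_set_def)
    qed
    have "AE x in M. x \<in> A \<longrightarrow> exceed_prob \<nu> k x \<le> R * thr"
      using AE_exceed_prob_le_before_next_stop[OF st, of n k]
      by eventually_elim (use True in \<open>auto simp: A_def\<close>)
    then have "measure M (A \<inter> exceed_set \<nu>) \<le> (R * thr) * measure M A"
      unfolding exceed_prob_def by (rule measure_Int_le_if_cond_exp_le[OF A exceed_set_sets[OF st]])
    then have "measure M A \<le> (R * thr) * measure M A"
      using \<open>A \<subseteq> exceed_set \<nu>\<close> by (simp add: Int_absorb2)
    then have "measure M A = 0"
      using R_thr_less_1 measure_nonneg[of M A] by (smt (verit) mult_le_cancel_right1)
    then have "AE x in M. x \<notin> A" using A by (simp add: prob_eq_0 sets_F_imp_sets)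
    then show ?thesis using AE_space by eventually_elim (auto simp: A_def level_eq_Pk not_less)
  qed auto
  then show ?thesis by (simp add: AE_all_countable)
qed

lemma AE_abs_E_le_rlevel:
  assumes st: "stopping_time_enat M F \<nu>"
  shows "AE x in M. \<forall>n k. \<nu> x = enat n \<and> n \<le> k \<and> enat k \<le> next_stop \<nu> x \<longrightarrow> \<bar>E k x\<bar> \<le> rlevel \<nu> x"
  using AE_abs_E_le_level[OF st] AE_level_real[OF st] by eventually_elim auto

section \<open>Square function increments\<close>

lemma AE_abs_mult_E_le:
  assumes "AE x in M. \<bar>h x\<bar> \<le> c"
  shows "AE x in M. \<bar>h x * E k x * E j x\<bar> \<le> c * B * B \<and> \<bar>h x * E k x * f x\<bar> \<le> c * B * B"
  using assms AE_abs_E_le AE_space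
proof eventually_elim
  case (elim x)
  then have "\<bar>h x\<bar> \<le> c" "\<bar>E k x\<bar> \<le> B" "\<bar>E j x\<bar> \<le> B" "\<bar>f x\<bar> \<le> B" using f_bounded by auto
  then show ?case by (auto simp: abs_mult intro!: mult_mono)
qed

lemma integral_mult_mdiff_square:
  assumes h [measurable]: "h \<in> borel_measurable (F m)" and h_le: "AE x in M. \<bar>h x\<bar> \<le> c"
  shows "(\<integral>x. h x * (mdiff M F f (Suc m) x)\<^sup>2 \<partial>M) =
    (\<integral>x. h x * (E (Suc m) x)\<^sup>2 \<partial>M) - (\<integral>x. h x * (E m x)\<^sup>2 \<partial>M)"
proof -
  interpret S1: sigma_finite_subalgebra M "F (Suc m)" by (rule sigma_finite_subalgebra_F)
  interpret S0: sigma_finite_subalgebra M "F m" by (rule sigma_finite_subalgebra_F)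
  have [measurable]: "h \<in> borel_measurable M" by (rule measurable_F_imp_measurable[OF h])
  have hE1 [measurable]: "(\<lambda>x. h x * E m x) \<in> borel_measurable (F (Suc m))"
    by (rule measurable_F_mono[of m]) auto
  have int: "integrable M (\<lambda>x. h x * E k x * E j x)" "integrable M (\<lambda>x. h x * E k x * f x)" for k j
    using AE_abs_mult_E_le[OF h_le, of k j]
    by (auto intro!: integrable_bounded_real[where C="c * B * B"] elim: eventually_mono)
  have "(\<integral>x. h x * E m x * E (Suc m) x \<partial>M) = (\<integral>x. h x * E m x * f x \<partial>M)"
    using S1.real_cond_exp_intg(2)[OF int(2) hE1 f_measurable] by simp
  also have "\<dots> = (\<integral>x. h x * E m x * E m x \<partial>M)"
    using S0.real_cond_exp_intg(2)[OF int(2), of m] by simp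
  finally have cross: "(\<integral>x. h x * E m x * E (Suc m) x \<partial>M) = (\<integral>x. h x * E m x * E m x \<partial>M)" .
  have "(\<integral>x. h x * (mdiff M F f (Suc m) x)\<^sup>2 \<partial>M) = (\<integral>x. (h x * E (Suc m) x * E (Suc m) x
      - h x * E m x * E m x) - 2 * (h x * E m x * E (Suc m) x - h x * E m x * E m x) \<partial>M)"
    by (intro Bochner_Integration.integral_cong) (auto simp: power2_eq_square algebra_simps)
  also have "\<dots> = ((\<integral>x. h x * E (Suc m) x * E (Suc m) x \<partial>M) - (\<integral>x. h x * E m x * E m x \<partial>M))
      - 2 * ((\<integral>x. h x * E m x * E (Suc m) x \<partial>M) - (\<integral>x. h x * E m x * E m x \<partial>M))"
  proof -
    note i = int(1)[of "Suc m" "Suc m"] int(1)[of m m] int(1)[of m "Suc m"]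
    have "(\<integral>x. (h x * E (Suc m) x * E (Suc m) x - h x * E m x * E m x)
        - 2 * (h x * E m x * E (Suc m) x - h x * E m x * E m x) \<partial>M)
      = (\<integral>x. h x * E (Suc m) x * E (Suc m) x - h x * E m x * E m x \<partial>M)
        - (\<integral>x. 2 * (h x * E m x * E (Suc m) x - h x * E m x * E m x) \<partial>M)"
      using i by (intro Bochner_Integration.integral_diff Bochner_Integration.integrable_diff
        integrable_mult_right)
    also have "\<dots> = ((\<integral>x. h x * E (Suc m) x * E (Suc m) x \<partial>M) - (\<integral>x. h x * E m x * E m x \<partial>M))
        - 2 * ((\<integral>x. h x * E m x * E (Suc m) x \<partial>M) - (\<integral>x. h x * E m x * E m x \<partial>M))"
      using i by (simp only: Bochner_Integration.integral_diff integral_mult_right_zero)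
    finally show ?thesis .
  qed
  also have "\<dots> = (\<integral>x. h x * E (Suc m) x * E (Suc m) x \<partial>M) - (\<integral>x. h x * E m x * E m x \<partial>M)"
    unfolding cross by simp
  finally show ?thesis by (simp add: power2_eq_square mult.assoc)
qed

lemma AE_stopped_E_square_increments_le:
  assumes st: "stopping_time_enat M F \<nu>"
  shows "AE x in M. \<forall>n N. \<nu> x = enat n \<longrightarrow>
    (\<Sum>m\<in>{n<..N}. if enat m \<le> next_stop \<nu> x then (E m x)\<^sup>2 - (E (m - 1) x)\<^sup>2 else 0) \<le> (rlevel \<nu> x)\<^sup>2"
  using AE_abs_E_le_rlevel[OF st]
proof eventually_elim
  case (elim x)
  show ?case
  proof safe
    fix n N assume n: "\<nu> x = enat n"
    show "(\<Sum>m\<in>{n<..N}. if enat m \<le> next_stop \<nu> x then (E m x)\<^sup>2 - (E (m - 1) x)\<^sup>2 else 0)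
      \<le> (rlevel \<nu> x)\<^sup>2"
    proof (cases "n \<le> N")
      case True
      obtain s where s: "n \<le> s" "enat s \<le> next_stop \<nu> x" and
        eq: "(\<Sum>m\<in>{n<..N}. if enat m \<le> next_stop \<nu> x then (E m x)\<^sup>2 - (E (m - 1) x)\<^sup>2 else 0)
          = (E s x)\<^sup>2 - (E n x)\<^sup>2"
        using sum_stopped_increments[OF True less_imp_le[OF next_stop_gt[of \<nu> x n, OF n]], of "\<lambda>k. (E k x)\<^sup>2"] .
      have "\<bar>E s x\<bar> \<le> \<bar>rlevel \<nu> x\<bar>" using elim n s by force
      then have "(E s x)\<^sup>2 \<le> (rlevel \<nu> x)\<^sup>2" by (simp only: abs_le_square_iff)
      then show ?thesis unfolding eq using zero_le_power2[of "E n x"] by linarith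
    qed simp
  qed
qed

lemma stopped_sq_increment_measurable:
  "stopping_time_enat M F \<nu> \<Longrightarrow> stopped_sq_increment \<nu> n N \<in> borel_measurable M"
  unfolding stopped_sq_increment_def[abs_def]
  using stopping_time_enat_pred[OF stopping_time_next_stop]
    measurable_F_imp_measurable[OF mdiff_measurable]
  by measurable

lemma stopped_sq_increment_mono:
  "N \<le> N' \<Longrightarrow> stopped_sq_increment \<nu> n N x \<le> stopped_sq_increment \<nu> n N' x"
  unfolding stopped_sq_increment_def by (intro sum_mono2) auto

lemma integrable_weighted_stopped_sq_increment:
  assumes st: "stopping_time_enat M F \<nu>"
    and W [measurable]: "W \<in> borel_measurable M" and W_le: "\<And>x. \<bar>W x\<bar> \<le> c"
  shows "integrable M (\<lambda>x. W x * stopped_sq_increment \<nu> n N x)"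
proof (rule integrable_bounded_real)
  show "(\<lambda>x. W x * stopped_sq_increment \<nu> n N x) \<in> borel_measurable M"
    using stopped_sq_increment_measurable[OF st] by measurable
  show "AE x in M. \<bar>W x * stopped_sq_increment \<nu> n N x\<bar> \<le> c * (real (card {n<..N}) * (2 * B)\<^sup>2)"
    using AE_mdiff_square_le
  proof eventually_elim
    case (elim x)
    have "0 \<le> stopped_sq_increment \<nu> n N x"
      unfolding stopped_sq_increment_def by (auto intro: sum_nonneg)
    moreover have "stopped_sq_increment \<nu> n N x \<le> real (card {n<..N}) * (2 * B)\<^sup>2"
      unfolding stopped_sq_increment_def using elim by (intro sum_bounded_above) auto
    ultimately show ?case using W_le[of x] by (simp add: abs_mult mult_mono')
  qed
qed

lemma integrable_weighted_stopped_E_square_increments: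
  assumes st: "stopping_time_enat M F \<nu>"
    and W [measurable]: "W \<in> borel_measurable M" and W_le: "\<And>x. \<bar>W x\<bar> \<le> c"
  shows "integrable M (\<lambda>x. W x *
    (\<Sum>m\<in>{n<..N}. if enat m \<le> next_stop \<nu> x then (E m x)\<^sup>2 - (E (m - 1) x)\<^sup>2 else 0))"
proof (rule integrable_bounded_real)
  have [measurable]: "Measurable.pred M (\<lambda>x. enat m \<le> next_stop \<nu> x)" for m
    by (rule stopping_time_enat_pred[OF stopping_time_next_stop[OF st]])
  show "(\<lambda>x. W x * (\<Sum>m\<in>{n<..N}. if enat m \<le> next_stop \<nu> x
      then (E m x)\<^sup>2 - (E (m - 1) x)\<^sup>2 else 0)) \<in> borel_measurable M"
    by measurable
  show "AE x in M. \<bar>W x * (\<Sum>m\<in>{n<..N}. if enat m \<le> next_stop \<nu> x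
      then (E m x)\<^sup>2 - (E (m - 1) x)\<^sup>2 else 0)\<bar> \<le> c * (real (card {n<..N}) * B\<^sup>2)"
    using AE_abs_E_le
  proof eventually_elim
    case (elim x)
    have sq: "(E k x)\<^sup>2 \<le> B\<^sup>2" for k
      using elim[rule_format, of k] by (simp add: abs_le_square_iff[symmetric])
    have "\<bar>(E m x)\<^sup>2 - (E (m - 1) x)\<^sup>2\<bar> \<le> B\<^sup>2" for m
      unfolding abs_le_iff
      using sq[of m] sq[of "m - 1"] zero_le_power2[of "E m x"] zero_le_power2[of "E (m - 1) x"]
      by linarith
    then have "\<bar>\<Sum>m\<in>{n<..N}. if enat m \<le> next_stop \<nu> x then (E m x)\<^sup>2 - (E (m - 1) x)\<^sup>2 else 0\<bar>
        \<le> real (card {n<..N}) * B\<^sup>2"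
      by (intro order_trans[OF sum_abs] sum_bounded_above) auto
    then show ?case using W_le[of x] by (simp add: abs_mult mult_mono')
  qed
qed

lemma integrable_weighted_rlevel_square:
  assumes st: "stopping_time_enat M F \<nu>"
    and W [measurable]: "W \<in> borel_measurable M" and W_le: "\<And>x. \<bar>W x\<bar> \<le> c"
  shows "integrable M (\<lambda>x. W x * (rlevel \<nu> x)\<^sup>2)"
proof (rule integrable_bounded_real)
  show "(\<lambda>x. W x * (rlevel \<nu> x)\<^sup>2) \<in> borel_measurable M"
    using rlevel_measurable[OF st] by measurable
  show "AE x in M. \<bar>W x * (rlevel \<nu> x)\<^sup>2\<bar> \<le> c * B_ceil\<^sup>2"
    using AE_level_real[OF st]
  proof eventually_elim
    case (elim x)
    then have "(rlevel \<nu> x)\<^sup>2 \<le> B_ceil\<^sup>2" by (intro power_mono) auto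
    then show ?case using W_le[of x] by (simp add: abs_mult mult_mono')
  qed
qed

lemma integral_weighted_stopped_sq_increment_eq:
  assumes st: "stopping_time_enat M F \<nu>"
    and W [measurable]: "W \<in> borel_measurable (F n)" and W_le: "\<And>x. \<bar>W x\<bar> \<le> c"
  shows "(\<integral>x. W x * stopped_sq_increment \<nu> n N x \<partial>M) = (\<integral>x. W x *
    (\<Sum>m\<in>{n<..N}. if enat m \<le> next_stop \<nu> x then (E m x)\<^sup>2 - (E (m - 1) x)\<^sup>2 else 0) \<partial>M)"
proof -
  have c: "0 \<le> c" using W_le abs_ge_zero order_trans by blast
  have [measurable]: "W \<in> borel_measurable M" using W by (rule measurable_F_imp_measurable)
  have [measurable]: "mdiff M F f m \<in> borel_measurable M" for m
    by (rule measurable_F_imp_measurable[OF mdiff_measurable])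
  have [measurable]: "Measurable.pred M (\<lambda>x. enat m \<le> next_stop \<nu> x)" for m
    by (rule stopping_time_enat_pred[OF stopping_time_next_stop[OF st]])
  define H where "H m x = W x * indicator {x\<in>space M. enat m \<le> next_stop \<nu> x} x" for m x
  have H_le: "\<bar>H m x\<bar> \<le> c" for m x using W_le[of x] c by (auto simp: H_def indicator_def)
  have [measurable]: "H m \<in> borel_measurable M" for m unfolding H_def[abs_def] by measurable
  have H_pred: "H (Suc m) \<in> borel_measurable (F m)" if "n \<le> m" for m
    using borel_measurable_times[OF measurable_F_mono[OF that W] borel_measurable_indicator[OF
        stopping_time_enat_Suc_le_sets[OF stopping_time_next_stop[OF st]]]]
    unfolding H_def[abs_def] .
  have int_H: "integrable M (\<lambda>x. H m x * g x)"
    if "g \<in> borel_measurable M" "AE x in M. \<bar>g x\<bar> \<le> C" for m g C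
    using that(2) H_le c
    by (intro integrable_bounded_real[where C="c * C"])
      (use that(1) in measurable, auto elim!: eventually_mono simp: abs_mult intro: mult_mono)
  have E_sq_le: "AE x in M. \<bar>(E k x)\<^sup>2\<bar> \<le> B\<^sup>2" for k
    using AE_abs_E_le by eventually_elim (simp add: abs_le_square_iff[symmetric] order_trans[OF _ abs_ge_self])
  have int_E: "integrable M (\<lambda>x. H m x * (E k x)\<^sup>2)" for m k
    by (rule int_H[OF _ E_sq_le]) measurable
  have int_d: "integrable M (\<lambda>x. H m x * (mdiff M F f m x)\<^sup>2)" for m
  proof (rule int_H)
    show "AE x in M. \<bar>(mdiff M F f m x)\<^sup>2\<bar> \<le> (2 * B)\<^sup>2"
      using AE_mdiff_square_le by eventually_elim simp
  qed measurable
  have "(\<integral>x. W x * stopped_sq_increment \<nu> n N x \<partial>M) = (\<integral>x. (\<Sum>m\<in>{n<..N}. H m x * (mdiff M F f m x)\<^sup>2) \<partial>M)"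
    by (intro Bochner_Integration.integral_cong)
      (auto simp: stopped_sq_increment_def H_def sum_distrib_left indicator_def intro!: sum.cong)
  also have "\<dots> = (\<Sum>m\<in>{n<..N}. \<integral>x. H m x * (mdiff M F f m x)\<^sup>2 \<partial>M)"
    using int_d by simp
  also have "\<dots> = (\<Sum>m\<in>{n<..N}. \<integral>x. H m x * (E m x)\<^sup>2 - H m x * (E (m - 1) x)\<^sup>2 \<partial>M)"
  proof (rule sum.cong)
    fix m assume "m \<in> {n<..N}"
    then obtain m' where m': "m = Suc m'" "n \<le> m'" by (cases m) auto
    then show "(\<integral>x. H m x * (mdiff M F f m x)\<^sup>2 \<partial>M) = (\<integral>x. H m x * (E m x)\<^sup>2 - H m x * (E (m - 1) x)\<^sup>2 \<partial>M)"
      using integral_mult_mdiff_square[OF H_pred, of m' c] H_le int_E by simp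
  qed simp
  also have "\<dots> = (\<integral>x. (\<Sum>m\<in>{n<..N}. H m x * (E m x)\<^sup>2 - H m x * (E (m - 1) x)\<^sup>2) \<partial>M)"
    using int_E by simp
  also have "\<dots> = (\<integral>x. W x *
      (\<Sum>m\<in>{n<..N}. if enat m \<le> next_stop \<nu> x then (E m x)\<^sup>2 - (E (m - 1) x)\<^sup>2 else 0) \<partial>M)"
    by (intro Bochner_Integration.integral_cong)
      (auto simp: H_def sum_distrib_left indicator_def right_diff_distrib intro!: sum.cong)
  finally show ?thesis .
qed

lemma integral_stopped_sq_increment_le:
  assumes st: "stopping_time_enat M F \<nu>" and D: "D \<in> sets (F n)"
    and D_sub: "D \<subseteq> {x\<in>space M. \<nu> x = enat n}"
    and w [measurable]: "w \<in> borel_measurable (F n)" and w_nonneg: "\<And>x. 0 \<le> w x"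
    and w_le: "\<And>x. w x \<le> c"
  shows "(\<integral>x. indicator D x * w x * stopped_sq_increment \<nu> n N x \<partial>M)
    \<le> (\<integral>x. indicator D x * w x * (rlevel \<nu> x)\<^sup>2 \<partial>M)"
proof -
  have c: "0 \<le> c" using w_nonneg w_le order_trans by blast
  have W: "(\<lambda>x. indicator D x * w x) \<in> borel_measurable (F n)" using D by measurable
  have W_le: "\<bar>indicator D x * w x\<bar> \<le> c" for x
    using w_nonneg[of x] w_le[of x] c by (auto simp: indicator_def)
  have WM: "(\<lambda>x. indicator D x * w x) \<in> borel_measurable M" by (rule measurable_F_imp_measurable[OF W])
  show ?thesis
    unfolding integral_weighted_stopped_sq_increment_eq[OF st W W_le]
  proof (rule integral_mono_AE)
    show "integrable M (\<lambda>x. indicator D x * w x * (\<Sum>m\<in>{n<..N}. if enat m \<le> next_stop \<nu> x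
        then (E m x)\<^sup>2 - (E (m - 1) x)\<^sup>2 else 0))"
      using integrable_weighted_stopped_E_square_increments[OF st WM W_le] .
    show "integrable M (\<lambda>x. indicator D x * w x * (rlevel \<nu> x)\<^sup>2)"
      using integrable_weighted_rlevel_square[OF st WM W_le] .
    show "AE x in M. indicator D x * w x * (\<Sum>m\<in>{n<..N}. if enat m \<le> next_stop \<nu> x
        then (E m x)\<^sup>2 - (E (m - 1) x)\<^sup>2 else 0) \<le> indicator D x * w x * (rlevel \<nu> x)\<^sup>2"
      using AE_stopped_E_square_increments_le[OF st]
    proof eventually_elim
      case (elim x)
      show ?case
      proof (cases "x \<in> D")
        case True
        then have "\<nu> x = enat n" using D_sub by auto
        then show ?thesis using elim w_nonneg[of x] True by (simp add: mult_left_mono)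
      qed simp
    qed
  qed
qed

section \<open>Sparseness\<close>

lemma measure_exceed_at_next_stop_le:
  assumes st: "stopping_time_enat M F \<nu>" and D: "D \<in> sets (F n)"
    and D_sub: "D \<subseteq> {x\<in>space M. \<nu> x = enat n}"
  shows "measure M (D \<inter> {x\<in>space M. \<exists>k. next_stop \<nu> x = enat k \<and> thr < exceed_prob \<nu> k x})
    \<le> r / thr * measure M D"
proof -
  define A where "A k = D \<inter> {x\<in>space M. next_stop \<nu> x = enat k \<and> thr < exceed_prob \<nu> k x}" for k
  have G: "exceed_set \<nu> \<in> sets M" by (rule exceed_set_sets[OF st])
  have A: "A k \<in> sets (F k)" for k
  proof (cases "n < k")
    case True
    have "{x\<in>space (F k). thr < exceed_prob \<nu> k x} \<in> sets (F k)"
      unfolding exceed_prob_def by measurable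
    moreover have "D \<in> sets (F k)" using D sets_F_mono[of n k] True by auto
    moreover have "{x\<in>space M. next_stop \<nu> x = enat k} \<in> sets (F k)"
      by (rule stopping_time_enat_eq_sets[OF stopping_time_next_stop[OF st]])
    ultimately have "D \<inter> {x\<in>space M. next_stop \<nu> x = enat k} \<inter> {x\<in>space (F k). thr < exceed_prob \<nu> k x}
        \<in> sets (F k)"
      by (intro sets.Int)
    also have "D \<inter> {x\<in>space M. next_stop \<nu> x = enat k} \<inter> {x\<in>space (F k). thr < exceed_prob \<nu> k x} = A k"
      unfolding A_def space_F by blast
    finally show ?thesis .
  next
    case False
    have "x \<notin> A k" for x
    proof
      assume "x \<in> A k"
      then have "\<nu> x = enat n" "next_stop \<nu> x = enat k" using D_sub unfolding A_def by auto
      then show False using next_stop_gt[of \<nu> x n] False by simp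
    qed
    then have "A k = {}" by blast
    then show ?thesis by simp
  qed
  have "thr * measure M (A k \<inter> space M) \<le> 1 * measure M (A k \<inter> exceed_set \<nu>)" for k
  proof -
    have "thr * measure M (A k) \<le> measure M (A k \<inter> exceed_set \<nu>)"
      using A G by (intro measure_Int_ge_if_cond_exp_ge) (auto simp: A_def exceed_prob_def)
    then show ?thesis using sets.sets_into_space[OF A[of k]] by (simp add: Int_absorb2)
  qed
  then have "thr * measure M ((\<Union>k. A k) \<inter> space M) \<le> 1 * measure M ((\<Union>k. A k) \<inter> exceed_set \<nu>)"
    using A G by (intro scaled_measure_Int_UN_le) (auto simp: disjoint_family_on_def A_def dest: sets_F_imp_sets)
  also have "\<dots> \<le> measure M (D \<inter> exceed_set \<nu>)"
    using sets.Int[OF sets_F_imp_sets[OF D] G] by (simp, intro finite_measure_mono) (auto simp: A_def)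
  also have "\<dots> \<le> r * measure M D" by (rule measure_exceed_set_le[OF st D D_sub])
  also have "(\<Union>k. A k) \<inter> space M = D \<inter> {x\<in>space M. \<exists>k. next_stop \<nu> x = enat k \<and> thr < exceed_prob \<nu> k x}"
    by (auto simp: A_def)
  finally show ?thesis using thr_pos by (simp add: field_simps)
qed

(* Chebyshev's inequality with the F n-measurable weight w = 1 / max (rlevel^2) c, which is
   1 / rlevel^2 on the event and bounded by 1 / c. *)
lemma measure_large_stopped_sq_increment_le:
  assumes st: "stopping_time_enat M F \<nu>" and D: "D \<in> sets (F n)"
    and D_sub: "D \<subseteq> {x\<in>space M. \<nu> x = enat n}"
  shows "measure M (D \<inter> {x\<in>space M. K * (rlevel \<nu> x)\<^sup>2 < stopped_sq_increment \<nu> n N x \<and>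
    1 / (real N + 1) \<le> (rlevel \<nu> x)\<^sup>2}) \<le> measure M D / K"
proof -
  define X where "X = D \<inter> {x\<in>space M. K * (rlevel \<nu> x)\<^sup>2 < stopped_sq_increment \<nu> n N x \<and>
    1 / (real N + 1) \<le> (rlevel \<nu> x)\<^sup>2}"
  define c :: real where "c = 1 / (real N + 1)"
  have c: "0 < c" unfolding c_def by simp
  define P where "P = Pk M F r n (Mf \<nu>)"
  have [measurable]: "P \<in> borel_measurable (F n)" unfolding P_def by (rule Pk_measurable)
  define w where "w x = 1 / max ((real_of_ereal (P x))\<^sup>2) c" for x
  have w [measurable]: "w \<in> borel_measurable (F n)" unfolding w_def[abs_def] by measurable
  have w_bounds: "0 \<le> w x" "w x \<le> 1 / c" for x using c unfolding w_def by (auto simp: frac_le)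
  have w_rlevel: "w x = 1 / max ((rlevel \<nu> x)\<^sup>2) c" if "x \<in> D" for x
    using that D_sub unfolding w_def rlevel_def P_def by (auto simp: level_eq_Pk)
  have [measurable]: "D \<in> sets M" using D by (rule sets_F_imp_sets)
  have [measurable]: "w \<in> borel_measurable M" using w by (rule measurable_F_imp_measurable)
  have [measurable]: "rlevel \<nu> \<in> borel_measurable M" by (rule rlevel_measurable[OF st])
  have [measurable]: "stopped_sq_increment \<nu> n N \<in> borel_measurable M"
    by (rule stopped_sq_increment_measurable[OF st])
  have SN_nonneg: "0 \<le> stopped_sq_increment \<nu> n N x" for x
    unfolding stopped_sq_increment_def by (auto intro: sum_nonneg)
  have [measurable]: "X \<in> sets M" unfolding X_def by measurable
  have "K * measure M X = (\<integral>x. indicator X x * K \<partial>M)" by simp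
  also have "\<dots> \<le> (\<integral>x. indicator D x * w x * stopped_sq_increment \<nu> n N x \<partial>M)"
  proof (rule integral_mono)
    show "integrable M (\<lambda>x. indicator X x * K)" by simp
    show "integrable M (\<lambda>x. indicator D x * w x * stopped_sq_increment \<nu> n N x)"
      using w_bounds c by (intro integrable_weighted_stopped_sq_increment[OF st, where c="1 / c"])
        (auto simp: indicator_def)
    show "indicator X x * K \<le> indicator D x * w x * stopped_sq_increment \<nu> n N x" for x
    proof (cases "x \<in> X")
      case True
      then have x: "x \<in> D" "K * (rlevel \<nu> x)\<^sup>2 < stopped_sq_increment \<nu> n N x" "c \<le> (rlevel \<nu> x)\<^sup>2"
        unfolding X_def c_def by auto
      then have "w x = 1 / (rlevel \<nu> x)\<^sup>2" using w_rlevel by (simp add: max_def)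
      moreover have "0 < (rlevel \<nu> x)\<^sup>2" using x c by linarith
      ultimately show ?thesis
        using x True by (simp add: indicator_def pos_le_divide_eq less_imp_le)
    next
      case False
      then show ?thesis using w_bounds[of x] SN_nonneg[of x] by (simp add: indicator_def)
    qed
  qed
  also have "\<dots> \<le> (\<integral>x. indicator D x * w x * (rlevel \<nu> x)\<^sup>2 \<partial>M)"
    using integral_stopped_sq_increment_le[OF st D D_sub w w_bounds] .
  also have "\<dots> \<le> (\<integral>x. indicator D x \<partial>M)"
  proof (rule integral_mono)
    have le: "indicator D x * w x * (rlevel \<nu> x)\<^sup>2 \<le> indicator D x" for x
      using c w_rlevel[of x] by (auto simp: indicator_def field_simps max_def)
    show "integrable M (\<lambda>x. indicator D x * w x * (rlevel \<nu> x)\<^sup>2)"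
      using w_bounds c by (intro integrable_weighted_rlevel_square[OF st, where c="1 / c"])
        (auto simp: indicator_def)
    show "integrable M (indicator D :: 'a \<Rightarrow> real)" by simp
    show "indicator D x * w x * (rlevel \<nu> x)\<^sup>2 \<le> indicator D x" for x by (rule le)
  qed
  also have "\<dots> = measure M D" by simp
  finally show ?thesis using K_pos unfolding X_def by (simp add: field_simps)
qed

lemma measure_stopped_sq_increment_exceeds_le:
  assumes st: "stopping_time_enat M F \<nu>" and D: "D \<in> sets (F n)"
    and D_sub: "D \<subseteq> {x\<in>space M. \<nu> x = enat n}"
  shows "measure M (D \<inter> {x\<in>space M. rlevel \<nu> x \<noteq> 0 \<and>
    (\<exists>N. K * (rlevel \<nu> x)\<^sup>2 < stopped_sq_increment \<nu> n N x)}) \<le> measure M D / K"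
proof -
  define X where "X N = D \<inter> {x\<in>space M. K * (rlevel \<nu> x)\<^sup>2 < stopped_sq_increment \<nu> n N x \<and>
    1 / (real N + 1) \<le> (rlevel \<nu> x)\<^sup>2}" for N
  have "D \<inter> {x\<in>space M. rlevel \<nu> x \<noteq> 0 \<and> (\<exists>N. K * (rlevel \<nu> x)\<^sup>2 < stopped_sq_increment \<nu> n N x)}
      = (\<Union>N. X N)"
  proof (intro equalityI subsetI)
    fix x assume x: "x \<in> D \<inter> {x\<in>space M. rlevel \<nu> x \<noteq> 0 \<and>
      (\<exists>N. K * (rlevel \<nu> x)\<^sup>2 < stopped_sq_increment \<nu> n N x)}"
    then obtain N0 where N0: "K * (rlevel \<nu> x)\<^sup>2 < stopped_sq_increment \<nu> n N0 x" by blast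
    obtain N1 where N1: "1 / (rlevel \<nu> x)\<^sup>2 < real N1" using reals_Archimedean2 by blast
    define N where "N = max N0 N1"
    have pos: "0 < (rlevel \<nu> x)\<^sup>2" using x by simp
    have "real N1 \<le> real N" unfolding N_def by simp
    with N1 have "1 / (rlevel \<nu> x)\<^sup>2 < real N + 1" by linarith
    then have "1 < (real N + 1) * (rlevel \<nu> x)\<^sup>2" using pos by (simp add: divide_less_eq)
    then have "1 / (real N + 1) \<le> (rlevel \<nu> x)\<^sup>2" by (simp add: divide_le_eq mult.commute)
    moreover have "K * (rlevel \<nu> x)\<^sup>2 < stopped_sq_increment \<nu> n N x"
      using N0 stopped_sq_increment_mono[of N0 N \<nu> n x] unfolding N_def by simp
    ultimately show "x \<in> (\<Union>N. X N)" using x unfolding X_def by blast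
  next
    fix x assume "x \<in> (\<Union>N. X N)"
    then obtain N where "x \<in> X N" by blast
    moreover have "0 < 1 / (real N + 1)" by simp
    ultimately show "x \<in> D \<inter> {x\<in>space M. rlevel \<nu> x \<noteq> 0 \<and>
      (\<exists>N. K * (rlevel \<nu> x)\<^sup>2 < stopped_sq_increment \<nu> n N x)}"
      unfolding X_def by (auto simp: power2_eq_square)
  qed
  also have "measure M (\<Union>N. X N) \<le> measure M D / K"
  proof (rule measure_UN_incseq_le)
    show "incseq X"
    proof (rule incseq_SucI)
      fix N
      have "1 / (real (Suc N) + 1) \<le> 1 / (real N + 1)" by (simp add: frac_le)
      then show "X N \<subseteq> X (Suc N)"
        using stopped_sq_increment_mono[of N "Suc N" \<nu> n] unfolding X_def
        by (force intro: less_le_trans order_trans)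
    qed
    show "X N \<in> sets M" for N
      unfolding X_def
      using sets_F_imp_sets[OF D] rlevel_measurable[OF st] stopped_sq_increment_measurable[OF st]
      by measurable
    show "measure M (X N) \<le> measure M D / K" for N
      unfolding X_def by (rule measure_large_stopped_sq_increment_le[OF st D D_sub])
  qed
  finally show ?thesis .
qed

lemma sq_increment_eq_0_if_rlevel_eq_0:
  assumes "\<nu> x = enat n" "next_stop \<nu> x = enat k" "rlevel \<nu> x = 0"
    and "\<forall>n k. \<nu> x = enat n \<and> n \<le> k \<and> enat k \<le> next_stop \<nu> x \<longrightarrow> \<bar>E k x\<bar> \<le> rlevel \<nu> x"
  shows "sq_increment n k x = 0"
  unfolding sq_increment_def
proof (rule sum.neutral, rule ballI)
  fix m assume m: "m \<in> {n<..k}"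
  then obtain m' where m': "m = Suc m'" "n \<le> m'" by (cases m) auto
  have "E m x = 0" "E m' x = 0" using assms m m' by force+
  then show "(mdiff M F f m x)\<^sup>2 = 0" using m' by simp
qed

lemma measure_next_stop_finite_le_half:
  assumes st: "stopping_time_enat M F \<nu>" and D: "D \<in> sets (F n)"
    and D_sub: "D \<subseteq> {x\<in>space M. \<nu> x = enat n}"
  shows "measure M (D \<inter> fin_set M (next_stop \<nu>)) \<le> measure M D / 2"
proof -
  define T1 where "T1 = D \<inter> {x\<in>space M. \<exists>k. next_stop \<nu> x = enat k \<and> thr < exceed_prob \<nu> k x}"
  define T2 where "T2 = D \<inter> {x\<in>space M. rlevel \<nu> x \<noteq> 0 \<and>
    (\<exists>N. K * (rlevel \<nu> x)\<^sup>2 < stopped_sq_increment \<nu> n N x)}"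
  have [measurable]: "D \<in> sets M" using D by (rule sets_F_imp_sets)
  have [measurable]: "Measurable.pred M (\<lambda>x. next_stop \<nu> x = enat k)" for k
    by (rule stopping_time_enat_pred[OF stopping_time_next_stop[OF st]])
  have [measurable]: "rlevel \<nu> \<in> borel_measurable M" by (rule rlevel_measurable[OF st])
  have [measurable]: "stopped_sq_increment \<nu> n N \<in> borel_measurable M" for N
    by (rule stopped_sq_increment_measurable[OF st])
  have T: "T1 \<in> sets M" "T2 \<in> sets M" unfolding T1_def T2_def exceed_prob_def by measurable
  have "AE x in M. x \<in> D \<inter> fin_set M (next_stop \<nu>) \<longrightarrow> x \<in> T1 \<union> T2"
    using AE_abs_E_le_rlevel[OF st]
  proof eventually_elim
    case (elim x)
    show ?case
    proof
      assume x: "x \<in> D \<inter> fin_set M (next_stop \<nu>)"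
      then have n: "\<nu> x = enat n" "x \<in> space M" using D_sub by auto
      from x obtain k where k: "next_stop \<nu> x = enat k" by (cases "next_stop \<nu> x") (auto simp: fin_set_def)
      have "thr < exceed_prob \<nu> k x \<or> K * (rlevel \<nu> x)\<^sup>2 < sq_increment n k x"
        using stop_cond_at_next_stop[OF n(1) k] stop_cond_iff_level[of \<nu> x n k] n(1) by simp
      then show "x \<in> T1 \<union> T2"
      proof
        assume "thr < exceed_prob \<nu> k x"
        then show ?thesis using x n k unfolding T1_def by auto
      next
        assume large: "K * (rlevel \<nu> x)\<^sup>2 < sq_increment n k x"
        then have "rlevel \<nu> x \<noteq> 0"
          using sq_increment_eq_0_if_rlevel_eq_0[of \<nu> x n k] n(1) k elim by auto
        moreover have "stopped_sq_increment \<nu> n k x = sq_increment n k x"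
          using k unfolding stopped_sq_increment_def sq_increment_def by (intro sum.cong) auto
        ultimately show ?thesis using large x n unfolding T2_def by (auto intro!: exI[of _ k])
      qed
    qed
  qed
  then have "measure M (D \<inter> fin_set M (next_stop \<nu>)) \<le> measure M (T1 \<union> T2)"
    using T by (intro finite_measure_mono_AE) auto
  also have "\<dots> \<le> measure M T1 + measure M T2" using T by (rule measure_Un_le)
  also have "\<dots> \<le> r / thr * measure M D + measure M D / K"
    unfolding T1_def T2_def
    using measure_exceed_at_next_stop_le[OF st D D_sub] measure_stopped_sq_increment_exceeds_le[OF st D D_sub]
    by (rule add_mono)
  also have "\<dots> = (r / thr + 1 / K) * measure M D" by (simp add: algebra_simps)
  also have "\<dots> = measure M D / 2" unfolding r_div_thr_plus_inverse_K by simp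
  finally show ?thesis .
qed

lemma measure_stopped_next_stop_finite_le_half:
  assumes st: "stopping_time_enat M F \<nu>" and A_sub: "A \<subseteq> fin_set M \<nu>"
    and A: "in_stopped_sets M F \<nu> A"
  shows "measure M (A \<inter> fin_set M (next_stop \<nu>)) \<le> measure M A / 2"
proof -
  define An where "An n = A \<inter> {x\<in>space M. \<nu> x = enat n}" for n
  have An: "An n \<in> sets (F n)" for n using A unfolding in_stopped_sets_def An_def by auto
  have A_UN: "(\<Union>n. An n) = A"
  proof (intro equalityI subsetI)
    fix x assume "x \<in> A"
    with A_sub have "x \<in> space M" "\<nu> x < \<infinity>" by (auto simp: fin_set_def)
    with \<open>x \<in> A\<close> show "x \<in> (\<Union>n. An n)" unfolding An_def by (cases "\<nu> x") auto
  qed (auto simp: An_def)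
  have "1 * measure M (An n \<inter> fin_set M (next_stop \<nu>)) \<le> 1 / 2 * measure M (An n \<inter> space M)" for n
    using measure_next_stop_finite_le_half[OF st An, of n] sets.sets_into_space[OF An[of n]]
    by (simp add: An_def Int_absorb2)
  then have "1 * measure M ((\<Union>n. An n) \<inter> fin_set M (next_stop \<nu>)) \<le> 1 / 2 * measure M ((\<Union>n. An n) \<inter> space M)"
    using An fin_set_sets[OF stopping_time_next_stop[OF st]]
    by (intro scaled_measure_Int_UN_le) (auto simp: disjoint_family_on_def An_def dest: sets_F_imp_sets)
  moreover have "A \<subseteq> space M" using A_sub by (auto simp: fin_set_def)
  ultimately show ?thesis unfolding A_UN by (simp add: Int_absorb2)
qed

definition stops :: "nat \<Rightarrow> 'a \<Rightarrow> enat" where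
  "stops j = (next_stop ^^ j) (\<lambda>_. 0)"

lemma stops_0: "stops 0 = (\<lambda>_. 0)" and stops_Suc: "stops (Suc j) = next_stop (stops j)"
  unfolding stops_def by simp_all

lemma stopping_time_stops: "stopping_time_enat M F (stops j)"
  by (induction j) (simp_all add: stops_0 stops_Suc stopping_time_enat_zero stopping_time_next_stop)

lemma in_stopped_sets_fin_set:
  assumes "stopping_time_enat M F \<nu>"
  shows "in_stopped_sets M F \<nu> (fin_set M \<nu>)"
proof -
  have "fin_set M \<nu> \<inter> {x\<in>space M. \<nu> x = enat k} = {x\<in>space M. \<nu> x = enat k}" for k
    by (auto simp: fin_set_def)
  then show ?thesis
    unfolding in_stopped_sets_def using fin_set_sets[OF assms] stopping_time_enat_eq_sets[OF assms] by simp
qed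

lemma sparse_stops: "sparse M F stops"
  unfolding sparse_def
  using stopping_time_stops next_stop_ge measure_stopped_next_stop_finite_le_half[OF stopping_time_stops]
  by (simp add: stops_Suc)

lemma measure_fin_set_stops_le: "measure M (fin_set M (stops j)) \<le> (1 / 2) ^ j"
proof (induction j)
  case 0
  then show ?case by simp
next
  case (Suc j)
  have "fin_set M (stops (Suc j)) = fin_set M (stops j) \<inter> fin_set M (next_stop (stops j))"
  proof -
    have "stops j x < \<infinity>" if "next_stop (stops j) x < \<infinity>" for x
      using next_stop_ge[of "stops j" x] that by (rule le_less_trans)
    then show ?thesis unfolding fin_set_def stops_Suc by blast
  qed
  also have "measure M \<dots> \<le> measure M (fin_set M (stops j)) / 2"
    using stopping_time_stops in_stopped_sets_fin_set
    by (intro measure_stopped_next_stop_finite_le_half) auto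
  finally show ?case using Suc.IH by simp
qed

lemma AE_stops_eventually_infinite: "AE x in M. \<exists>J. stops J x = \<infinity>"
proof -
  define Z where "Z = (\<Inter>j. fin_set M (stops j))"
  have Z: "Z \<in> sets M" unfolding Z_def using fin_set_sets[OF stopping_time_stops] by auto
  have "measure M Z \<le> (1 / 2) ^ j" for j
    using measure_fin_set_stops_le[of j] fin_set_sets[OF stopping_time_stops]
    by (smt (verit) INT_lower Z_def finite_measure_mono UNIV_I)
  then have "measure M Z \<le> 0"
    using LIMSEQ_le_const[OF LIMSEQ_power_zero[of "1 / 2 :: real"], of "measure M Z"] by auto
  then have "AE x in M. x \<notin> Z" using Z measure_nonneg[of M Z] by (simp add: prob_eq_0)
  then show ?thesis using AE_space by eventually_elim (auto simp: Z_def fin_set_def)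
qed

lemma AE_sqfun_le_stops:
  "AE x in M. sqfun M F f x \<le> ennreal (sqrt (K + 5)) *
     esqrt (\<Sum>j. e2ennreal ((level (stops j) x)\<^sup>2) * indicator (fin_set M (stops j)) x)"
proof -
  have "AE x in M. \<forall>j. level (stops j) x = ereal (rlevel (stops j) x)"
    using AE_level_real[OF stopping_time_stops] by (auto simp: AE_all_countable elim: eventually_mono)
  moreover have "AE x in M. \<forall>j n k. stops j x = enat n \<and> n \<le> k \<and> enat k \<le> stops (Suc j) x \<longrightarrow>
      \<bar>E k x\<bar> \<le> rlevel (stops j) x"
    using AE_abs_E_le_rlevel[OF stopping_time_stops] by (simp add: AE_all_countable stops_Suc)
  ultimately show ?thesis using AE_stops_eventually_infinite AE_space
  proof eventually_elim
    case (elim x)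
    obtain J where J: "stops J x = \<infinity>" using elim by blast
    define L where "L j = (if stops j x = \<infinity> then 0 else (rlevel (stops j) x)\<^sup>2)" for j
    have L_nonneg: "0 \<le> L j" for j unfolding L_def by simp
    have term_eq: "e2ennreal ((level (stops j) x)\<^sup>2) * indicator (fin_set M (stops j)) x = ennreal (L j)" for j
      using elim by (cases "stops j x") (auto simp: L_def fin_set_def ereal_power indicator_def)
    have blocks: "(\<Sum>m<N. (mdiff M F f m x)\<^sup>2) \<le> (K + 5) * (\<Sum>j<J. L j)" for N
      unfolding L_def
    proof (rule sum_squares_le_blocks[where e="\<lambda>k. E k x"])
      show "0 \<le> K" using K_pos by simp
      show "stops 0 x = 0" by (simp add: stops_0)
      show "enat n < stops (Suc j) x" if "stops j x = enat n" for j n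
        unfolding stops_Suc using that by (rule next_stop_gt)
      show "stops (Suc j) x = \<infinity>" if "stops j x = \<infinity>" for j
        unfolding stops_Suc using that by (rule next_stop_infinity)
      show "\<bar>E k x\<bar> \<le> rlevel (stops j) x"
        if "stops j x = enat n" "n \<le> k" "enat k \<le> stops (Suc j) x" for j n k
        using elim that by blast
      show "(\<Sum>m\<in>{n<..k}. (mdiff M F f m x)\<^sup>2) \<le> K * (rlevel (stops j) x)\<^sup>2"
        if "stops j x = enat n" "n < k" "enat k < stops (Suc j) x" for j n k
        using not_stop_cond_before_next_stop[of "stops j" x n k] stop_cond_iff_level[of "stops j" x n k]
          that by (simp add: stops_Suc sq_increment_def)
    qed (use J in simp_all)
    have "(\<Sum>m. ennreal ((mdiff M F f m x)\<^sup>2)) \<le> ennreal (K + 5) * (\<Sum>j. ennreal (L j))"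
    proof (rule suminf_le_const)
      fix N
      have "(\<Sum>m<N. ennreal ((mdiff M F f m x)\<^sup>2)) = ennreal (\<Sum>m<N. (mdiff M F f m x)\<^sup>2)"
        by (rule sum_ennreal) auto
      also have "\<dots> \<le> ennreal ((K + 5) * (\<Sum>j<J. L j))" by (rule ennreal_leI[OF blocks])
      also have "\<dots> = ennreal (K + 5) * (\<Sum>j<J. ennreal (L j))"
        using K_pos L_nonneg by (simp add: ennreal_mult sum_nonneg sum_ennreal)
      also have "\<dots> \<le> ennreal (K + 5) * (\<Sum>j. ennreal (L j))"
        by (intro mult_left_mono sum_le_suminf) auto
      finally show "(\<Sum>m<N. ennreal ((mdiff M F f m x)\<^sup>2)) \<le> ennreal (K + 5) * (\<Sum>j. ennreal (L j))" .
    qed simp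
    then show ?case
      unfolding sqfun_def term_eq using K_pos by (intro esqrt_le_sqrt_mult) auto
  qed
qed

end

theorem corollary2p3:
  fixes M :: "'a measure" and F :: "nat \<Rightarrow> 'a measure" and R :: real
  assumes "prob_space M"
    and "filtration M F"
    and "regular M F R"
  shows "\<exists>C::real. \<forall>f::'a \<Rightarrow> real.
           f \<in> borel_measurable M \<and> (\<exists>B. \<forall>x \<in> space M. \<bar>f x\<bar> \<le> B) \<longrightarrow>
           (\<exists>\<nu> :: nat \<Rightarrow> 'a \<Rightarrow> enat. sparse M F \<nu> \<and>
              (AE x in M. sqfun M F f x \<le> ennreal C * esqrt (\<Sum>j.
                  e2ennreal ((Pnu M F (1 / (2 * (R + 3))) (\<nu> j)
                      (\<lambda>y. enn2ereal (stopped_max M F (\<nu> j) f y)) x)\<^sup>2)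
                  * indicator (fin_set M (\<nu> j)) x)))"
proof (intro exI[of _ "sqrt (R + 3 + 5)"] allI impI)
  fix f :: "'a \<Rightarrow> real"
  assume "f \<in> borel_measurable M \<and> (\<exists>B. \<forall>x \<in> space M. \<bar>f x\<bar> \<le> B)"
  then obtain B where "f \<in> borel_measurable M" "\<forall>x \<in> space M. \<bar>f x\<bar> \<le> B" by blast
  then interpret sparse_construction M F R f B
    using assms by (intro sparse_construction.intro sparse_construction_axioms.intro
      regular_filtered_prob_space.intro regular_filtered_prob_space_axioms.intro
      filtered_prob_space.intro filtered_prob_space_axioms.intro) auto
  show "\<exists>\<nu>. sparse M F \<nu> \<and> (AE x in M. sqfun M F f x \<le> ennreal (sqrt (R + 3 + 5)) * esqrt (\<Sum>j.
      e2ennreal ((Pnu M F (1 / (2 * (R + 3))) (\<nu> j) (\<lambda>y. enn2ereal (stopped_max M F (\<nu> j) f y)) x)\<^sup>2)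
      * indicator (fin_set M (\<nu> j)) x))"
    using sparse_stops AE_sqfun_le_stops unfolding level_def Mf_def[abs_def] r_def K_def by blast
qed

end
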